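(* Let $G$ be a finite group, and let $f:G \to \{\pm 1\}$ be a class function (i.e. $f(x^{-1}yx) = f(y)$ for all $x,y \in G$) with $\mathbb{E}_{x \in G} f(x) = 0$. Then \[ \Pr_{x,y}\,[f(x)f(y) = f(xy)] \le \frac{1}{2}\left(1 + \frac{1}{d}\right), \] where $x,y$ are chosen uniformly and independently from $G$, and $d = \min_{\rho \ne 1} d_\rho$ is the minimum dimension of a nontrivial irreducible (complex) representation $\rho$ of $G$.
   Context: $d_\rho$ denotes the dimension of the representation $\rho$; the minimum is over nontrivial irreducible complex representations of $G$. $\mathbb{E}$ denotes the average over the uniform distribution on $G$. *)

theory Defs
  imports "HOL-Algebra.Group" "Jordan_Normal_Form.Matrix"
begin

definition is_rep :: "('a, 'b) monoid_scheme \<Rightarrow> nat \<Rightarrow> ('a \<Rightarrow> complex mat) \<Rightarrow> bool" where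
  "is_rep G n \<rho> \<longleftrightarrow>
     (\<forall>g\<in>carrier G. \<rho> g \<in> carrier_mat n n) \<and>
     \<rho> \<one>\<^bsub>G\<^esub> = 1\<^sub>m n \<and>
     (\<forall>g\<in>carrier G. \<forall>h\<in>carrier G. \<rho> (g \<otimes>\<^bsub>G\<^esub> h) = \<rho> g * \<rho> h)"

definition is_subspace :: "nat \<Rightarrow> complex vec set \<Rightarrow> bool" where
  "is_subspace n W \<longleftrightarrow> W \<subseteq> carrier_vec n \<and> 0\<^sub>v n \<in> W \<and>
     (\<forall>v\<in>W. \<forall>w\<in>W. v + w \<in> W) \<and> (\<forall>c. \<forall>v\<in>W. c \<cdot>\<^sub>v v \<in> W)"

definition is_invariant :: "('a, 'b) monoid_scheme \<Rightarrow> nat \<Rightarrow> ('a \<Rightarrow> complex mat) \<Rightarrow> complex vec set \<Rightarrow> bool" where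
  "is_invariant G n \<rho> W \<longleftrightarrow> is_subspace n W \<and> (\<forall>g\<in>carrier G. \<forall>v\<in>W. \<rho> g *\<^sub>v v \<in> W)"

definition is_irrep :: "('a, 'b) monoid_scheme \<Rightarrow> nat \<Rightarrow> ('a \<Rightarrow> complex mat) \<Rightarrow> bool" where
  "is_irrep G n \<rho> \<longleftrightarrow> is_rep G n \<rho> \<and> n > 0 \<and>
     (\<forall>W. is_invariant G n \<rho> W \<longrightarrow> W = {0\<^sub>v n} \<or> W = carrier_vec n)"

definition is_trivial_rep :: "('a, 'b) monoid_scheme \<Rightarrow> nat \<Rightarrow> ('a \<Rightarrow> complex mat) \<Rightarrow> bool" where
  "is_trivial_rep G n \<rho> \<longleftrightarrow> (\<forall>g\<in>carrier G. \<rho> g = 1\<^sub>m n)"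

definition min_nontriv_irrep_dim :: "('a, 'b) monoid_scheme \<Rightarrow> nat" where
  "min_nontriv_irrep_dim G =
     (LEAST n. \<exists>\<rho> :: 'a \<Rightarrow> complex mat. is_irrep G n \<rho> \<and> \<not> is_trivial_rep G n \<rho>)"

end

theory Submission
  imports Defs "Jordan_Normal_Form.Char_Poly" "HOL-Computational_Algebra.Fundamental_Theorem_Algebra"
begin

(* Put T = \<Sum>x y. f x f y f (x y); the probability in question is (1 + T / |G|\<^sup>2) / 2.
   For the correlation operator (A u) y = \<Sum>x. f x u (x y) on \<complex>^G we have T = \<langle>f, A f\<rangle>, so by
   Cauchy-Schwarz and the spectral theorem T\<^sup>2 \<le> |G| \<langle>f, A\<^sup>*A f\<rangle> \<le> |G|\<^sup>2 \<lambda> for some eigenvalue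
   \<lambda> of A\<^sup>*A. As A commutes with right translations, G acts on the \<lambda>-eigenspace; an invariant
   subspace of minimal dimension m affords an irreducible representation, which is nontrivial
   because A kills the constants (f has mean 0). Since f is a class function, Schur's lemma
   makes all m\<^sup>2 matrix coefficients of this representation \<lambda>-eigenvectors of A\<^sup>*A, and by Schur
   orthogonality they are orthogonal; comparing with the trace of A\<^sup>*A, which is |G|\<^sup>2, gives
   m\<^sup>2 \<lambda> \<le> |G|\<^sup>2. Hence T \<le> |G|\<^sup>2 / m \<le> |G|\<^sup>2 / d. *)

section \<open>Schur's lemma and Schur orthogonality\<close>

lemma complex_mat_has_eigenvector:
  fixes M :: "complex mat" assumes M: "M \<in> carrier_mat k k" and k: "k > 0"
  shows "\<exists>\<mu> c. c \<in> carrier_vec k \<and> c \<noteq> 0\<^sub>v k \<and> M *\<^sub>v c = \<mu> \<cdot>\<^sub>v c"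
proof -
  have "degree (char_poly M) = k" using degree_monic_char_poly[OF M] by simp
  then have "\<not> constant (poly (char_poly M))" using k by (simp add: constant_degree)
  then obtain z where "poly (char_poly M) z = 0" using fundamental_theorem_of_algebra by blast
  then have "eigenvalue M z" using eigenvalue_root_char_poly[OF M] by simp
  then show ?thesis using M by (auto simp: eigenvalue_def eigenvector_def)
qed

lemma nonzero_vec_has_nonzero_entry:
  assumes "c \<in> carrier_vec k" "c \<noteq> 0\<^sub>v k"
  obtains i where "i < k" "c $ i \<noteq> 0"
  using assms by (metis carrier_vecD eq_vecI index_zero_vec(1,2))

lemma schur_lemma:
  assumes irr: "is_irrep G m \<rho>" and M: "M \<in> carrier_mat m m"
    and comm: "\<forall>g\<in>carrier G. \<rho> g * M = M * \<rho> g"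
  shows "\<exists>c. M = c \<cdot>\<^sub>m 1\<^sub>m m"
proof -
  have m: "m > 0" and rep: "is_rep G m \<rho>" using irr by (auto simp: is_irrep_def)
  have rc: "\<And>g. g \<in> carrier G \<Longrightarrow> \<rho> g \<in> carrier_mat m m" using rep by (auto simp: is_rep_def)
  obtain \<mu> c where c: "c \<in> carrier_vec m" "c \<noteq> 0\<^sub>v m" "M *\<^sub>v c = \<mu> \<cdot>\<^sub>v c"
    using complex_mat_has_eigenvector[OF M m] by blast
  define W where "W = {v \<in> carrier_vec m. M *\<^sub>v v = \<mu> \<cdot>\<^sub>v v}"
  have sub: "is_subspace m W"
    unfolding is_subspace_def W_def using M
    by (auto simp: mult_add_distrib_mat_vec mult_mat_vec smult_add_distrib_vec smult_smult_assoc mult.commute)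
  have inv: "is_invariant G m \<rho> W"
    unfolding is_invariant_def
  proof (intro conjI sub ballI)
    fix g v assume g: "g \<in> carrier G" and v: "v \<in> W"
    have vc: "v \<in> carrier_vec m" using v W_def by auto
    have "M *\<^sub>v (\<rho> g *\<^sub>v v) = (M * \<rho> g) *\<^sub>v v" using M rc[OF g] vc by simp
    also have "\<dots> = (\<rho> g * M) *\<^sub>v v" using comm g by simp
    also have "\<dots> = \<rho> g *\<^sub>v (M *\<^sub>v v)" using M rc[OF g] vc by simp
    also have "\<dots> = \<mu> \<cdot>\<^sub>v (\<rho> g *\<^sub>v v)" using v W_def rc[OF g] vc by (simp add: mult_mat_vec)
    finally show "\<rho> g *\<^sub>v v \<in> W" using rc[OF g] vc W_def by auto
  qed
  have "W \<noteq> {0\<^sub>v m}" using c W_def by auto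
  then have full: "W = carrier_vec m" using irr inv unfolding is_irrep_def by blast
  have "M = \<mu> \<cdot>\<^sub>m 1\<^sub>m m"
  proof (rule eq_matI)
    fix i j assume i: "i < dim_row (\<mu> \<cdot>\<^sub>m 1\<^sub>m m)" and j: "j < dim_col (\<mu> \<cdot>\<^sub>m 1\<^sub>m m)"
    have "unit_vec m j \<in> W" using full j by simp
    then have "M *\<^sub>v unit_vec m j = \<mu> \<cdot>\<^sub>v unit_vec m j" unfolding W_def by simp
    then have "(M *\<^sub>v unit_vec m j) $ i = (\<mu> \<cdot>\<^sub>v unit_vec m j) $ i" by simp
    then show "M $$ (i, j) = (\<mu> \<cdot>\<^sub>m 1\<^sub>m m) $$ (i, j)" using i j M
      by (auto simp: scalar_prod_def unit_vec_def if_distrib[of "times _"] sum.delta' cong: if_cong)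
  qed (use M in auto)
  then show ?thesis by blast
qed

lemma mat_mult_entry:
  "A \<in> carrier_mat m m \<Longrightarrow> B \<in> carrier_mat m m \<Longrightarrow> i < m \<Longrightarrow> k < m \<Longrightarrow>
   (A * B) $$ (i, k) = (\<Sum>p<m. A $$ (i, p) * B $$ (p, k))"
  by (simp add: scalar_prod_def lessThan_atLeast0 row_def col_def)

definition class_function :: "('a, 'b) monoid_scheme \<Rightarrow> ('a \<Rightarrow> 'c) \<Rightarrow> bool" where
  "class_function G F \<longleftrightarrow> (\<forall>x\<in>carrier G. \<forall>y\<in>carrier G. F (inv\<^bsub>G\<^esub> x \<otimes>\<^bsub>G\<^esub> y \<otimes>\<^bsub>G\<^esub> x) = F y)"

context group
begin

lemma sum_mult_right: "y \<in> carrier G \<Longrightarrow> (\<Sum>x\<in>carrier G. F (x \<otimes> y)) = (\<Sum>x\<in>carrier G. F x)"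
  by (rule sum.reindex_bij_witness[of _ "\<lambda>z. z \<otimes> inv y" "\<lambda>x. x \<otimes> y"]) (auto simp: m_assoc)

lemma sum_mult_left: "y \<in> carrier G \<Longrightarrow> (\<Sum>x\<in>carrier G. F (y \<otimes> x)) = (\<Sum>x\<in>carrier G. F x)"
  by (rule sum.reindex_bij_witness[of _ "\<lambda>z. inv y \<otimes> z" "\<lambda>x. y \<otimes> x"]) (auto simp: m_assoc[symmetric])

lemma sum_conj: "h \<in> carrier G \<Longrightarrow> (\<Sum>x\<in>carrier G. F (h \<otimes> x \<otimes> inv h)) = (\<Sum>x\<in>carrier G. F x)"
  using sum_mult_left[of h "\<lambda>y. F (y \<otimes> inv h)"] sum_mult_right[of "inv h" F] by simp

lemma mult_inv_mult_right:
  assumes "z \<in> carrier G" "g \<in> carrier G" "x \<in> carrier G"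
  shows "z \<otimes> g \<otimes> inv (x \<otimes> g) = z \<otimes> inv x"
proof -
  have "g \<otimes> (inv g \<otimes> inv x) = inv x" using assms by (simp add: m_assoc[symmetric])
  then show ?thesis using assms by (simp add: inv_mult_group m_assoc)
qed

lemma class_function_conj:
  "class_function G F \<Longrightarrow> h \<in> carrier G \<Longrightarrow> y \<in> carrier G \<Longrightarrow> F (h \<otimes> y \<otimes> inv h) = F y"
  unfolding class_function_def by (metis inv_closed inv_inv)

lemma class_function_inv: "class_function G F \<Longrightarrow> class_function G (\<lambda>x. F (inv x))"
  unfolding class_function_def by (simp add: inv_mult_group m_assoc)

lemma class_function_comp: "class_function G F \<Longrightarrow> class_function G (\<lambda>x. \<phi> (F x))"
  unfolding class_function_def by simp

lemma rep_carrier: "is_rep G m \<rho> \<Longrightarrow> g \<in> carrier G \<Longrightarrow> \<rho> g \<in> carrier_mat m m"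
  unfolding is_rep_def by blast

lemma rep_mult_entry:
  "is_rep G m \<rho> \<Longrightarrow> g \<in> carrier G \<Longrightarrow> h \<in> carrier G \<Longrightarrow> i < m \<Longrightarrow> j < m \<Longrightarrow>
   \<rho> (g \<otimes> h) $$ (i, j) = (\<Sum>p<m. \<rho> g $$ (i, p) * \<rho> h $$ (p, j))"
  unfolding is_rep_def by (simp add: mat_mult_entry)

lemma class_sum_commutes:
  assumes rep: "is_rep G m \<rho>" and h: "h \<in> carrier G"
    and F: "class_function G F"
  defines "M \<equiv> mat m m (\<lambda>(i, k). \<Sum>x\<in>carrier G. F x * \<rho> x $$ (i, k))"
  shows "\<rho> h * M = M * \<rho> h"
proof -
  have Mc: "M \<in> carrier_mat m m" unfolding M_def by simp
  show ?thesis
  proof (rule eq_matI)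
    fix i k assume "i < dim_row (M * \<rho> h)" "k < dim_col (M * \<rho> h)"
    then have i: "i < m" and k: "k < m" using rep_carrier[OF rep h] unfolding M_def by auto
    have "(\<rho> h * M) $$ (i, k) = (\<Sum>p<m. \<rho> h $$ (i, p) * (\<Sum>x\<in>carrier G. F x * \<rho> x $$ (p, k)))"
      using mat_mult_entry[OF rep_carrier[OF rep h] Mc i k] k unfolding M_def by simp
    also have "\<dots> = (\<Sum>x\<in>carrier G. F x * (\<Sum>p<m. \<rho> h $$ (i, p) * \<rho> x $$ (p, k)))"
      by (simp add: sum_distrib_left sum.swap[of _ "{..<m}"] ac_simps)
    also have "\<dots> = (\<Sum>x\<in>carrier G. F x * \<rho> (h \<otimes> x) $$ (i, k))"
      using h i k by (intro sum.cong refl) (simp add: rep_mult_entry[OF rep])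
    also have "\<dots> = (\<Sum>x\<in>carrier G. F (h \<otimes> x \<otimes> inv h) * \<rho> (h \<otimes> x \<otimes> inv h \<otimes> h) $$ (i, k))"
    proof (intro sum.cong refl)
      fix x assume x: "x \<in> carrier G"
      have "h \<otimes> x \<otimes> inv h \<otimes> h = h \<otimes> x" using h x by (simp add: m_assoc)
      then show "F x * \<rho> (h \<otimes> x) $$ (i, k) = F (h \<otimes> x \<otimes> inv h) * \<rho> (h \<otimes> x \<otimes> inv h \<otimes> h) $$ (i, k)"
        using class_function_conj[OF F h x] by simp
    qed
    also have "\<dots> = (\<Sum>x\<in>carrier G. F x * \<rho> (x \<otimes> h) $$ (i, k))"
      by (rule sum_conj[OF h, of "\<lambda>x. F x * \<rho> (x \<otimes> h) $$ (i, k)"])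
    also have "\<dots> = (\<Sum>x\<in>carrier G. F x * (\<Sum>p<m. \<rho> x $$ (i, p) * \<rho> h $$ (p, k)))"
      using h i k by (intro sum.cong refl) (simp add: rep_mult_entry[OF rep])
    also have "\<dots> = (\<Sum>p<m. (\<Sum>x\<in>carrier G. F x * \<rho> x $$ (i, p)) * \<rho> h $$ (p, k))"
      by (simp add: sum_distrib_left sum_distrib_right sum.swap[of _ "{..<m}"] ac_simps)
    also have "\<dots> = (M * \<rho> h) $$ (i, k)"
      using mat_mult_entry[OF Mc rep_carrier[OF rep h] i k] i unfolding M_def by simp
    finally show "(\<rho> h * M) $$ (i, k) = (M * \<rho> h) $$ (i, k)" .
  qed (use rep_carrier[OF rep h] Mc in \<open>simp_all add: carrier_matD\<close>)
qed

lemma class_sum_scalar: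
  assumes irr: "is_irrep G m \<rho>"
    and F: "class_function G F"
  obtains c where "\<And>i k. i < m \<Longrightarrow> k < m \<Longrightarrow> (\<Sum>x\<in>carrier G. F x * \<rho> x $$ (i, k)) = (if i = k then c else 0)"
proof -
  have rep: "is_rep G m \<rho>" using irr by (simp add: is_irrep_def)
  define M where "M = mat m m (\<lambda>(i, k). \<Sum>x\<in>carrier G. F x * \<rho> x $$ (i, k))"
  have Mc: "M \<in> carrier_mat m m" unfolding M_def by simp
  have "\<rho> h * M = M * \<rho> h" if "h \<in> carrier G" for h
    unfolding M_def using rep that F by (rule class_sum_commutes)
  then obtain c where c: "M = c \<cdot>\<^sub>m 1\<^sub>m m" using schur_lemma[OF irr Mc] by blast
  show ?thesis
  proof (rule that)
    fix i k assume "i < m" "k < m"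
    then show "(\<Sum>x\<in>carrier G. F x * \<rho> x $$ (i, k)) = (if i = k then c else 0)"
      using arg_cong[OF c, of "\<lambda>A. A $$ (i, k)"] by (simp add: M_def)
  qed
qed

lemma schur_average_commutes:
  assumes rep: "is_rep G m \<rho>" and h: "h \<in> carrier G" and j: "j < m" and q: "q < m"
  defines "M \<equiv> mat m m (\<lambda>(i, k). \<Sum>g\<in>carrier G. \<rho> g $$ (i, j) * \<rho> (inv g) $$ (q, k))"
  shows "\<rho> h * M = M * \<rho> h"
proof -
  have Mc: "M \<in> carrier_mat m m" unfolding M_def by simp
  show ?thesis
  proof (rule eq_matI)
    fix a c assume "a < dim_row (M * \<rho> h)" "c < dim_col (M * \<rho> h)"
    then have a: "a < m" and c: "c < m" using rep_carrier[OF rep h] unfolding M_def by auto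
    have "(\<rho> h * M) $$ (a, c) = (\<Sum>p<m. \<rho> h $$ (a, p) * (\<Sum>g\<in>carrier G. \<rho> g $$ (p, j) * \<rho> (inv g) $$ (q, c)))"
      using mat_mult_entry[OF rep_carrier[OF rep h] Mc a c] c unfolding M_def by simp
    also have "\<dots> = (\<Sum>g\<in>carrier G. (\<Sum>p<m. \<rho> h $$ (a, p) * \<rho> g $$ (p, j)) * \<rho> (inv g) $$ (q, c))"
      by (simp add: sum_distrib_left sum_distrib_right sum.swap[of _ "{..<m}"] ac_simps)
    also have "\<dots> = (\<Sum>g\<in>carrier G. \<rho> (h \<otimes> g) $$ (a, j) * \<rho> (inv g) $$ (q, c))"
      using h a j by (intro sum.cong refl) (simp add: rep_mult_entry[OF rep])
    also have "\<dots> = (\<Sum>g\<in>carrier G. \<rho> (h \<otimes> g) $$ (a, j) * \<rho> (inv (h \<otimes> g) \<otimes> h) $$ (q, c))"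
      using h by (intro sum.cong refl) (simp add: inv_mult_group m_assoc)
    also have "\<dots> = (\<Sum>g\<in>carrier G. \<rho> g $$ (a, j) * \<rho> (inv g \<otimes> h) $$ (q, c))"
      by (rule sum_mult_left[OF h, of "\<lambda>g. \<rho> g $$ (a, j) * \<rho> (inv g \<otimes> h) $$ (q, c)"])
    also have "\<dots> = (\<Sum>g\<in>carrier G. \<rho> g $$ (a, j) * (\<Sum>p<m. \<rho> (inv g) $$ (q, p) * \<rho> h $$ (p, c)))"
      using h q c by (intro sum.cong refl) (simp add: rep_mult_entry[OF rep])
    also have "\<dots> = (\<Sum>p<m. (\<Sum>g\<in>carrier G. \<rho> g $$ (a, j) * \<rho> (inv g) $$ (q, p)) * \<rho> h $$ (p, c))"
      by (simp add: sum_distrib_left sum_distrib_right sum.swap[of _ "{..<m}"] ac_simps)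
    also have "\<dots> = (M * \<rho> h) $$ (a, c)"
      using mat_mult_entry[OF Mc rep_carrier[OF rep h] a c] a unfolding M_def by simp
    finally show "(\<rho> h * M) $$ (a, c) = (M * \<rho> h) $$ (a, c)" .
  qed (use rep_carrier[OF rep h] Mc in \<open>simp_all add: carrier_matD\<close>)
qed

lemma schur_orthogonality:
  assumes irr: "is_irrep G m \<rho>" and i: "i < m" and j: "j < m" and k: "k < m" and q: "q < m"
  shows "(\<Sum>g\<in>carrier G. \<rho> g $$ (i, j) * \<rho> (inv g) $$ (q, k)) =
    (if i = k \<and> q = j then of_nat (card (carrier G)) / of_nat m else 0)"
proof -
  have rep: "is_rep G m \<rho>" and m: "m > 0" using irr by (simp_all add: is_irrep_def)
  define M where "M = mat m m (\<lambda>(i, k). \<Sum>g\<in>carrier G. \<rho> g $$ (i, j) * \<rho> (inv g) $$ (q, k))"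
  have Mc: "M \<in> carrier_mat m m" unfolding M_def by simp
  have "\<rho> h * M = M * \<rho> h" if "h \<in> carrier G" for h
    unfolding M_def by (rule schur_average_commutes[OF rep that j q])
  then obtain c where c: "M = c \<cdot>\<^sub>m 1\<^sub>m m" using schur_lemma[OF irr Mc] by blast
  have "of_nat m * c = (\<Sum>a<m. M $$ (a, a))" using c by simp
  also have "\<dots> = (\<Sum>g\<in>carrier G. \<Sum>a<m. \<rho> (inv g) $$ (q, a) * \<rho> g $$ (a, j))"
    unfolding M_def by (simp add: sum.swap[of _ "{..<m}"] mult.commute)
  also have "\<dots> = (\<Sum>g\<in>carrier G. \<rho> (inv g \<otimes> g) $$ (q, j))"
  proof (intro sum.cong refl)
    fix g assume g: "g \<in> carrier G"
    show "(\<Sum>a<m. \<rho> (inv g) $$ (q, a) * \<rho> g $$ (a, j)) = \<rho> (inv g \<otimes> g) $$ (q, j)"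
      using rep_mult_entry[OF rep inv_closed[OF g] g q j] by simp
  qed
  also have "\<dots> = of_nat (card (carrier G)) * (if q = j then 1 else 0)"
    using rep q j by (simp add: is_rep_def)
  finally have "c = of_nat (card (carrier G)) * (if q = j then 1 else 0) / of_nat m"
    using m by (simp add: field_simps)
  moreover have "(\<Sum>g\<in>carrier G. \<rho> g $$ (i, j) * \<rho> (inv g) $$ (q, k)) = M $$ (i, k)"
    unfolding M_def using i k by simp
  ultimately show ?thesis using c i k by auto
qed

end

section \<open>Linear combinations of functions\<close>

definition lin_comb :: "nat \<Rightarrow> (nat \<Rightarrow> complex) \<Rightarrow> (nat \<Rightarrow> 'a \<Rightarrow> complex) \<Rightarrow> 'a \<Rightarrow> complex" where
  "lin_comb k c b = (\<lambda>x. \<Sum>i<k. c i * b i x)"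

definition in_span :: "nat \<Rightarrow> (nat \<Rightarrow> 'a \<Rightarrow> complex) \<Rightarrow> ('a \<Rightarrow> complex) \<Rightarrow> bool" where
  "in_span k b u \<longleftrightarrow> (\<exists>c. u = lin_comb k c b)"

abbreviation in_list_span :: "('a \<Rightarrow> complex) list \<Rightarrow> ('a \<Rightarrow> complex) \<Rightarrow> bool" where
  "in_list_span L u \<equiv> in_span (length L) ((!) L) u"

lemma lin_comb_cong:
  "(\<And>i. i < k \<Longrightarrow> c i = d i) \<Longrightarrow> (\<And>i. i < k \<Longrightarrow> b i = e i) \<Longrightarrow> lin_comb k c b = lin_comb k d e"
  unfolding lin_comb_def by (rule ext, rule sum.cong) auto

lemma lin_comb_Suc: "lin_comb (Suc k) c b = (\<lambda>x. lin_comb k c b x + c k * b k x)"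
  unfolding lin_comb_def by simp

lemma lin_comb_Cons:
  "lin_comb (Suc n) c ((!) (a # r)) = (\<lambda>x. c 0 * a x + lin_comb n (\<lambda>j. c (Suc j)) ((!) r) x)"
  unfolding lin_comb_def by (rule ext) (subst sum.lessThan_Suc_shift, simp)

lemma lin_comb_unit: "i < k \<Longrightarrow> lin_comb k (\<lambda>j. if j = i then 1 else 0) b = b i"
  unfolding lin_comb_def by (auto simp: if_distrib[of "\<lambda>a. a * _"] cong: if_cong)

lemma lin_comb_scale: "lin_comb k (\<lambda>i. a * c i) b = (\<lambda>x. a * lin_comb k c b x)"
  unfolding lin_comb_def by (auto simp: sum_distrib_left mult.assoc)

lemma in_span_cong: "(\<And>i. i < k \<Longrightarrow> b i = b' i) \<Longrightarrow> in_span k b u = in_span k b' u"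
  unfolding in_span_def using lin_comb_cong[of k _ _ b b'] by metis

lemma in_span_basis: "i < k \<Longrightarrow> in_span k b (b i)"
  unfolding in_span_def by (metis lin_comb_unit)

lemma in_list_span_member: "u \<in> set L \<Longrightarrow> in_list_span L u"
  by (metis in_set_conv_nth in_span_basis)

lemma in_span_0: "in_span 0 b u \<Longrightarrow> u = (\<lambda>x. 0)"
  unfolding in_span_def lin_comb_def by auto

lemma in_span_lin_comb:
  assumes "\<forall>j<k'. in_span k b (v j)"
  shows "in_span k b (lin_comb k' d v)"
proof -
  from assms have "\<forall>j. \<exists>c. j < k' \<longrightarrow> v j = lin_comb k c b" unfolding in_span_def by blast
  then obtain C where C: "\<And>j. j < k' \<Longrightarrow> v j = lin_comb k (C j) b" by metis
  have "lin_comb k' d v = lin_comb k (\<lambda>i. \<Sum>j<k'. d j * C j i) b"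
  proof (rule ext)
    fix x
    have "lin_comb k' d v x = (\<Sum>j<k'. d j * (\<Sum>i<k. C j i * b i x))"
      unfolding lin_comb_def using C by (intro sum.cong) (auto simp: lin_comb_def)
    also have "\<dots> = lin_comb k (\<lambda>i. \<Sum>j<k'. d j * C j i) b x"
      unfolding lin_comb_def
      by (simp add: sum_distrib_left sum_distrib_right sum.swap[of _ "{..<k}"] mult.assoc)
    finally show "lin_comb k' d v x = lin_comb k (\<lambda>i. \<Sum>j<k'. d j * C j i) b x" .
  qed
  then show ?thesis unfolding in_span_def by blast
qed

lemma in_span_trans: "\<forall>j<k'. in_span k b (v j) \<Longrightarrow> in_span k' v u \<Longrightarrow> in_span k b u"
  using in_span_lin_comb unfolding in_span_def[of k' v u] by blast

lemma in_list_span_trans: "\<forall>x\<in>set X. in_list_span Y x \<Longrightarrow> in_list_span X u \<Longrightarrow> in_list_span Y u"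
  by (rule in_span_trans[of "length X"]) auto

lemma in_span_scale: assumes "in_span k b u" shows "in_span k b (\<lambda>x. a * u x)"
proof -
  obtain c where "u = lin_comb k c b" using assms in_span_def by blast
  then have "(\<lambda>x. a * u x) = lin_comb k (\<lambda>i. a * c i) b" by (simp add: lin_comb_scale)
  then show ?thesis unfolding in_span_def by blast
qed

lemma in_span_add: assumes "in_span k b u" "in_span k b v" shows "in_span k b (\<lambda>x. u x + v x)"
proof -
  obtain c d where "u = lin_comb k c b" "v = lin_comb k d b" using assms in_span_def by blast
  then have "(\<lambda>x. u x + v x) = lin_comb k (\<lambda>i. c i + d i) b"
    by (auto simp: lin_comb_def sum.distrib ring_distribs)
  then show ?thesis unfolding in_span_def by blast
qed

lemma in_span_diff: assumes "in_span k b u" "in_span k b v" shows "in_span k b (\<lambda>x. u x - v x)"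
proof -
  obtain c d where "u = lin_comb k c b" "v = lin_comb k d b" using assms in_span_def by blast
  then have "(\<lambda>x. u x - v x) = lin_comb k (\<lambda>i. c i - d i) b"
    by (auto simp: lin_comb_def sum_subtractf ring_distribs)
  then show ?thesis unfolding in_span_def by blast
qed

section \<open>Complex functions on a finite set\<close>

lemma cnj_mult_self: "cnj z * z = complex_of_real ((cmod z)^2)"
  using complex_norm_square[of z] by (simp add: mult.commute)

locale finite_l2 =
  fixes S :: "'a set"
  assumes finite_S: "finite S"
begin

(* Elements of \<complex>^S are represented by total functions; those vanishing outside S are
   called supported. *)

definition supported :: "('a \<Rightarrow> complex) \<Rightarrow> bool" where
  "supported u \<longleftrightarrow> (\<forall>x. x \<notin> S \<longrightarrow> u x = 0)"

definition inner :: "('a \<Rightarrow> complex) \<Rightarrow> ('a \<Rightarrow> complex) \<Rightarrow> complex" where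
  "inner u v = (\<Sum>x\<in>S. cnj (u x) * v x)"

definition orthonormal :: "nat \<Rightarrow> (nat \<Rightarrow> 'a \<Rightarrow> complex) \<Rightarrow> bool" where
  "orthonormal k b \<longleftrightarrow> (\<forall>i<k. supported (b i)) \<and> (\<forall>i<k. \<forall>j<k. inner (b i) (b j) = (if i = j then 1 else 0))"

abbreviation orthonormal_list :: "('a \<Rightarrow> complex) list \<Rightarrow> bool" where
  "orthonormal_list L \<equiv> orthonormal (length L) ((!) L)"

definition normalize :: "('a \<Rightarrow> complex) \<Rightarrow> 'a \<Rightarrow> complex" where
  "normalize u = (\<lambda>x. complex_of_real (1 / sqrt (Re (inner u u))) * u x)"

lemma supported_lin_comb: "(\<And>i. i < k \<Longrightarrow> supported (b i)) \<Longrightarrow> supported (lin_comb k c b)"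
  unfolding supported_def lin_comb_def by simp

lemma orthonormal_supported: "orthonormal k b \<Longrightarrow> i < k \<Longrightarrow> supported (b i)"
  unfolding orthonormal_def by blast

lemma orthonormal_inner: "orthonormal k b \<Longrightarrow> i < k \<Longrightarrow> j < k \<Longrightarrow> inner (b i) (b j) = (if i = j then 1 else 0)"
  unfolding orthonormal_def by blast

lemma inner_cnj: "cnj (inner u v) = inner v u"
  unfolding inner_def by (simp add: mult.commute)

lemma inner_eq_0_sym: "inner u v = 0 \<Longrightarrow> inner v u = 0"
  by (metis complex_cnj_zero inner_cnj)

lemma inner_zero_left: "inner (\<lambda>x. 0) u = 0"
  unfolding inner_def by simp

lemma inner_add_left: "inner (\<lambda>x. u x + v x) w = inner u w + inner v w"
  unfolding inner_def by (simp add: sum.distrib ring_distribs)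

lemma inner_add_right: "inner w (\<lambda>x. u x + v x) = inner w u + inner w v"
  unfolding inner_def by (simp add: sum.distrib ring_distribs)

lemma inner_diff_left: "inner (\<lambda>x. u x - v x) w = inner u w - inner v w"
  unfolding inner_def by (simp add: sum_subtractf ring_distribs)

lemma inner_diff_right: "inner w (\<lambda>x. u x - v x) = inner w u - inner w v"
  unfolding inner_def by (simp add: sum_subtractf ring_distribs)

lemma inner_scale_left: "inner (\<lambda>x. a * u x) w = cnj a * inner u w"
  unfolding inner_def by (simp add: sum_distrib_left mult.assoc)

lemma inner_scale_right: "inner w (\<lambda>x. a * u x) = a * inner w u"
  unfolding inner_def by (simp add: sum_distrib_left mult.left_commute)

lemma inner_lin_comb_right: "inner u (lin_comb k c b) = (\<Sum>i<k. c i * inner u (b i))"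
  unfolding inner_def lin_comb_def
  by (simp add: sum_distrib_left sum_distrib_right sum.swap[of _ S] mult.assoc mult.left_commute)

lemma inner_lin_comb_left: "inner (lin_comb k c b) v = (\<Sum>i<k. cnj (c i) * inner (b i) v)"
  unfolding inner_def lin_comb_def
  by (simp add: sum_distrib_left sum_distrib_right sum.swap[of _ S] mult.assoc mult.left_commute)

lemma inner_self: "inner u u = of_real (\<Sum>x\<in>S. (cmod (u x))^2)"
  unfolding inner_def of_real_sum by (simp only: cnj_mult_self)

lemma inner_self_real: "inner u u = of_real (Re (inner u u))"
  by (simp add: inner_self)

lemma inner_self_nonneg: "Re (inner u u) \<ge> 0"
  by (simp add: inner_self sum_nonneg)

lemma inner_self_eq_0: assumes "supported u" "inner u u = 0" shows "u = (\<lambda>x. 0)"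
proof (rule ext)
  fix x
  have "complex_of_real (\<Sum>x\<in>S. (cmod (u x))^2) = 0" using assms(2) by (simp only: inner_self)
  then have "(\<Sum>x\<in>S. (cmod (u x))^2) = 0" by (simp only: of_real_eq_0_iff)
  then have "\<forall>x\<in>S. (cmod (u x))^2 = 0" using finite_S by (subst (asm) sum_nonneg_eq_0_iff) auto
  then show "u x = 0" using assms(1) unfolding supported_def by (cases "x \<in> S") auto
qed

lemma inner_self_pos: "supported u \<Longrightarrow> u \<noteq> (\<lambda>x. 0) \<Longrightarrow> Re (inner u u) > 0"
  by (metis inner_self_eq_0 inner_self_nonneg inner_self_real of_real_0 order_le_less)

lemma inner_normalize:
  assumes "supported u" "u \<noteq> (\<lambda>x. 0)"
  shows "inner (normalize u) (normalize u) = 1"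
proof -
  define r where "r = Re (inner u u)"
  have r: "r > 0" unfolding r_def using inner_self_pos[OF assms] .
  have "inner (normalize u) (normalize u) = complex_of_real (1 / sqrt r * (1 / sqrt r) * r)"
    unfolding normalize_def inner_scale_left inner_scale_right r_def
    by (subst (3) inner_self_real) (simp only: of_real_mult complex_cnj_complex_of_real mult.assoc)
  also have "1 / sqrt r * (1 / sqrt r) * r = 1" using r by (simp add: real_sqrt_mult_self)
  finally show ?thesis by simp
qed

lemma supported_normalize: "supported u \<Longrightarrow> supported (normalize u)"
  unfolding supported_def normalize_def by simp

lemma normalize_inverse:
  "supported u \<Longrightarrow> u \<noteq> (\<lambda>x. 0) \<Longrightarrow> u = (\<lambda>x. complex_of_real (sqrt (Re (inner u u))) * normalize u x)"
  using inner_self_pos[of u] by (auto simp: normalize_def field_simps)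

lemma inner_basis_lin_comb:
  assumes "orthonormal k b" "i < k"
  shows "inner (b i) (lin_comb k c b) = c i"
proof -
  have "inner (b i) (lin_comb k c b) = (\<Sum>j<k. c j * (if i = j then 1 else 0))"
    unfolding inner_lin_comb_right using assms by (intro sum.cong) (auto simp: orthonormal_inner)
  also have "\<dots> = c i" using assms(2) by (simp add: if_distrib[of "\<lambda>a. _ * a"] sum.delta cong: if_cong)
  finally show ?thesis .
qed

lemma orthonormal_expansion:
  assumes "orthonormal k b" "in_span k b u"
  shows "u = lin_comb k (\<lambda>i. inner (b i) u) b"
proof -
  obtain c where c: "u = lin_comb k c b" using assms(2) in_span_def by blast
  show ?thesis unfolding c by (intro lin_comb_cong) (auto simp: inner_basis_lin_comb[OF assms(1)])
qed

lemma parseval: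
  assumes "orthonormal k b" "in_span k b u"
  shows "Re (inner u u) = (\<Sum>i<k. (cmod (inner (b i) u))^2)"
proof -
  have "inner u u = inner (lin_comb k (\<lambda>i. inner (b i) u) b) u" using orthonormal_expansion[OF assms] by simp
  also have "\<dots> = of_real (\<Sum>i<k. (cmod (inner (b i) u))^2)"
    unfolding inner_lin_comb_left of_real_sum by (simp only: cnj_mult_self)
  finally show ?thesis by simp
qed

lemma bessel_defect:
  fixes a :: "'a \<Rightarrow> complex"
  assumes "orthonormal k b"
  defines "p \<equiv> lin_comb k (\<lambda>i. inner (b i) a) b"
  shows "Re (inner (\<lambda>x. a x - p x) (\<lambda>x. a x - p x)) = Re (inner a a) - (\<Sum>i<k. (cmod (inner (b i) a))^2)"
proof -
  define s where "s = (\<Sum>i<k. cnj (inner (b i) a) * inner (b i) a)"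
  have "inner a p = s" unfolding p_def inner_lin_comb_right s_def
    by (intro sum.cong refl) (metis inner_cnj mult.commute)
  moreover have "inner p a = s" unfolding p_def inner_lin_comb_left s_def by simp
  moreover have "inner p p = s" unfolding p_def inner_lin_comb_left s_def
    by (intro sum.cong refl) (simp add: inner_basis_lin_comb[OF assms(1)])
  moreover have "s = of_real (\<Sum>i<k. (cmod (inner (b i) a))^2)"
    unfolding s_def of_real_sum by (simp only: cnj_mult_self)
  ultimately show ?thesis by (simp add: inner_diff_left inner_diff_right)
qed

lemma bessel:
  assumes "orthonormal k b"
  shows "(\<Sum>i<k. (cmod (inner (b i) a))^2) \<le> Re (inner a a)"
  using bessel_defect[OF assms, of a] inner_self_nonneg[of "\<lambda>x. a x - lin_comb k (\<lambda>i. inner (b i) a) b x"]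
  by linarith

lemma bessel_eq_imp_in_span:
  assumes b: "orthonormal k b" and a: "supported a"
    and eq: "(\<Sum>i<k. (cmod (inner (b i) a))^2) = Re (inner a a)"
  shows "in_span k b a"
proof -
  define p where "p = lin_comb k (\<lambda>i. inner (b i) a) b"
  define d where "d = (\<lambda>x. a x - p x)"
  have "Re (inner d d) = 0" using bessel_defect[OF b, of a] eq unfolding d_def p_def by simp
  then have "inner d d = 0" by (metis inner_self_real of_real_0)
  moreover have "supported d"
    using a supported_lin_comb[of k b] orthonormal_supported[OF b] unfolding d_def p_def supported_def
    by (auto simp: lin_comb_def)
  ultimately have "d = (\<lambda>x. 0)" using inner_self_eq_0 by blast
  then have "a = p" unfolding d_def by (metis (no_types, lifting) ext eq_iff_diff_eq_0)
  then show ?thesis unfolding p_def in_span_def by blast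
qed

lemma cauchy_schwarz:
  assumes u: "supported u"
  shows "(cmod (inner u a))^2 \<le> Re (inner u u) * Re (inner a a)"
proof (cases "u = (\<lambda>x. 0)")
  case True
  then show ?thesis by (simp add: inner_zero_left)
next
  case False
  define r where "r = Re (inner u u)"
  have r: "r > 0" unfolding r_def using inner_self_pos[OF u False] .
  have "orthonormal 1 (\<lambda>_. normalize u)"
    unfolding orthonormal_def using inner_normalize[OF u False] supported_normalize[OF u] by simp
  then have "(cmod (inner (normalize u) a))^2 \<le> Re (inner a a)" using bessel[of 1 _ a] by simp
  moreover have "inner (normalize u) a = complex_of_real (1 / sqrt r) * inner u a"
    unfolding normalize_def inner_scale_left r_def by simp
  moreover have "cmod (complex_of_real (1 / sqrt r)) = 1 / sqrt r" using r by (simp only: norm_of_real) simp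
  ultimately have "(1 / sqrt r * cmod (inner u a))^2 \<le> Re (inner a a)" by (metis norm_mult)
  then have "(1 / sqrt r)^2 * (cmod (inner u a))^2 \<le> Re (inner a a)" by (simp only: power_mult_distrib)
  then have "(1 / r) * (cmod (inner u a))^2 \<le> Re (inner a a)" using r by (simp add: power_divide)
  then show ?thesis using r unfolding r_def by (simp add: field_simps)
qed

lemma orthonormal_count_eq:
  assumes b: "orthonormal k b" and c: "orthonormal k' c" and sub: "\<forall>i<k'. in_span k b (c i)"
  shows "real k' = (\<Sum>j<k. \<Sum>i<k'. (cmod (inner (c i) (b j)))^2)"
proof -
  have "real k' = (\<Sum>i<k'. Re (inner (c i) (c i)))" using c by (simp add: orthonormal_inner)
  also have "\<dots> = (\<Sum>i<k'. \<Sum>j<k. (cmod (inner (b j) (c i)))^2)"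
    using parseval[OF b] sub by (intro sum.cong) auto
  also have "\<dots> = (\<Sum>j<k. \<Sum>i<k'. (cmod (inner (c i) (b j)))^2)"
    by (subst sum.swap) (intro sum.cong refl, metis complex_mod_cnj inner_cnj)
  finally show ?thesis .
qed

lemma orthonormal_in_span_le:
  assumes b: "orthonormal k b" and c: "orthonormal k' c" and sub: "\<forall>i<k'. in_span k b (c i)"
  shows "k' \<le> k"
proof -
  have "(\<Sum>i<k'. (cmod (inner (c i) (b j)))^2) \<le> 1" if "j < k" for j
    using bessel[OF c, of "b j"] orthonormal_inner[OF b that that] by simp
  then have "real k' \<le> (\<Sum>j<k. 1)" unfolding orthonormal_count_eq[OF assms] by (intro sum_mono) auto
  then show ?thesis by simp
qed

lemma orthonormal_in_span_same_length:
  assumes b: "orthonormal k b" and c: "orthonormal k c" and sub: "\<forall>i<k. in_span k b (c i)"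
  shows "\<forall>j<k. in_span k c (b j)"
proof -
  define s where "s j = (\<Sum>i<k. (cmod (inner (c i) (b j)))^2)" for j
  have s_le: "s j \<le> 1" if "j < k" for j
    unfolding s_def using bessel[OF c, of "b j"] b that by (simp add: orthonormal_inner)
  have "(\<Sum>j<k. 1 - s j) = 0" using orthonormal_count_eq[OF assms] by (simp add: sum_subtractf s_def)
  then have s1: "\<forall>j\<in>{..<k}. 1 - s j = 0" using s_le by (subst (asm) sum_nonneg_eq_0_iff) auto
  show ?thesis
  proof (intro allI impI)
    fix j assume j: "j < k"
    show "in_span k c (b j)"
      by (rule bessel_eq_imp_in_span[OF c orthonormal_supported[OF b j]])
        (use j s1 b in \<open>auto simp: s_def orthonormal_inner\<close>)
  qed
qed

lemma point_basis: "\<exists>k e. orthonormal k e \<and> (\<forall>u. supported u \<longrightarrow> in_span k e u)"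
proof -
  obtain xs where xs: "set xs = S" "distinct xs" using finite_distinct_list[OF finite_S] by blast
  define e :: "nat \<Rightarrow> 'a \<Rightarrow> complex" where "e = (\<lambda>i x. if x = xs ! i then 1 else 0)"
  have xs_in: "xs ! i \<in> S" if "i < length xs" for i using xs(1) that nth_mem by blast
  have "orthonormal (length xs) e"
    unfolding orthonormal_def
  proof (intro conjI allI impI)
    fix i assume "i < length xs" then show "supported (e i)" using xs_in unfolding supported_def e_def by auto
  next
    fix i j assume i: "i < length xs" and j: "j < length xs"
    have "inner (e i) (e j) = (\<Sum>x\<in>S. if x = xs ! i then (if x = xs ! j then 1 else 0) else 0)"
      unfolding inner_def e_def by (intro sum.cong refl) auto
    also have "\<dots> = (if i = j then 1 else 0)"
      using xs_in[OF i] finite_S xs(2) i j by (simp add: sum.delta' nth_eq_iff_index_eq)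
    finally show "inner (e i) (e j) = (if i = j then 1 else 0)" .
  qed
  moreover have "u = lin_comb (length xs) (\<lambda>i. u (xs ! i)) e" if u: "supported u" for u
  proof (rule ext)
    fix x
    show "u x = lin_comb (length xs) (\<lambda>i. u (xs ! i)) e x"
    proof (cases "x \<in> S")
      case True
      then obtain i0 where i0: "i0 < length xs" "xs ! i0 = x" using xs(1) by (metis in_set_conv_nth)
      have "lin_comb (length xs) (\<lambda>i. u (xs ! i)) e x = (\<Sum>i<length xs. if i = i0 then u x else 0)"
        unfolding lin_comb_def e_def using i0 xs(2) by (intro sum.cong refl) (auto simp: nth_eq_iff_index_eq)
      then show ?thesis using i0 by simp
    next
      case False
      then have "x \<noteq> xs ! i" if "i < length xs" for i using xs_in that by blast
      then show ?thesis using u False unfolding lin_comb_def e_def supported_def by (auto intro!: sum.neutral)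
    qed
  qed
  ultimately show ?thesis unfolding in_span_def by blast
qed

definition proj :: "('a \<Rightarrow> complex) list \<Rightarrow> ('a \<Rightarrow> complex) \<Rightarrow> 'a \<Rightarrow> complex" where
  "proj L v = lin_comb (length L) (\<lambda>i. inner (L ! i) v) ((!) L)"

fun gram_schmidt :: "('a \<Rightarrow> complex) list \<Rightarrow> ('a \<Rightarrow> complex) list \<Rightarrow> ('a \<Rightarrow> complex) list" where
  "gram_schmidt acc [] = acc"
| "gram_schmidt acc (v # vs) = (let w = (\<lambda>x. v x - proj acc v x) in
     if inner w w = 0 then gram_schmidt acc vs else gram_schmidt (acc @ [normalize w]) vs)"

lemma orthonormal_list_ConsD:
  assumes "orthonormal_list (e # r)"
  shows "orthonormal_list r" and "\<forall>i<length r. inner e (r ! i) = 0"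
proof -
  have er: "orthonormal (Suc (length r)) ((!) (e # r))" using assms by simp
  show "orthonormal_list r"
    unfolding orthonormal_def
  proof (intro conjI allI impI)
    fix i assume "i < length r"
    then show "supported (r ! i)" using orthonormal_supported[OF er, of "Suc i"] by simp
  next
    fix i j assume "i < length r" "j < length r"
    then show "inner (r ! i) (r ! j) = (if i = j then 1 else 0)" using orthonormal_inner[OF er, of "Suc i" "Suc j"] by simp
  qed
  show "\<forall>i<length r. inner e (r ! i) = 0" using orthonormal_inner[OF er, of 0 "Suc i" for i] by simp
qed

lemma supported_diff_proj:
  "orthonormal_list acc \<Longrightarrow> supported v \<Longrightarrow> supported (\<lambda>x. v x - proj acc v x)"
  unfolding proj_def supported_def by (auto simp: lin_comb_def orthonormal_def supported_def)

lemma gram_schmidt_step: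
  assumes acc: "orthonormal_list acc" and v: "supported v"
  defines "w \<equiv> (\<lambda>x. v x - proj acc v x)"
  assumes w: "inner w w \<noteq> 0"
  shows "orthonormal_list (acc @ [normalize w])"
    and "in_list_span (acc @ [v]) (normalize w)"
    and "in_list_span (acc @ [normalize w]) v"
proof -
  have proj_span: "in_list_span X (proj acc v)" if "\<forall>x\<in>set acc. in_list_span X x" for X
    unfolding proj_def by (rule in_span_lin_comb) (use that in auto)
  have sw: "supported w" unfolding w_def using supported_diff_proj[OF acc v] .
  have w0: "w \<noteq> (\<lambda>x. 0)" using w inner_zero_left by auto
  have orth_w: "inner (acc ! i) (normalize w) = 0" if i: "i < length acc" for i
  proof -
    have "inner (acc ! i) w = 0"
      unfolding w_def inner_diff_right proj_def inner_basis_lin_comb[OF acc i] by simp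
    then show ?thesis unfolding normalize_def inner_scale_right by simp
  qed
  show "orthonormal_list (acc @ [normalize w])"
    unfolding orthonormal_def
  proof (intro conjI allI impI)
    fix i assume "i < length (acc @ [normalize w])"
    then show "supported ((acc @ [normalize w]) ! i)"
      using acc supported_normalize[OF sw] by (cases "i < length acc") (auto simp: nth_append orthonormal_supported)
  next
    fix i j assume "i < length (acc @ [normalize w])" "j < length (acc @ [normalize w])"
    then show "inner ((acc @ [normalize w]) ! i) ((acc @ [normalize w]) ! j) = (if i = j then 1 else 0)"
      using acc orth_w inner_eq_0_sym inner_normalize[OF sw w0]
      by (cases "i < length acc"; cases "j < length acc") (auto simp: nth_append orthonormal_inner)
  qed
  show "in_list_span (acc @ [v]) (normalize w)"
    unfolding normalize_def w_def
    by (intro in_span_scale in_span_diff in_list_span_member proj_span ballI) auto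
  have "in_list_span (acc @ [normalize w]) w"
    by (subst normalize_inverse[OF sw w0]) (intro in_span_scale in_list_span_member, simp)
  then have "in_list_span (acc @ [normalize w]) (\<lambda>x. w x + proj acc v x)"
    by (rule in_span_add) (intro proj_span ballI in_list_span_member, auto)
  moreover have "(\<lambda>x. w x + proj acc v x) = v" by (rule ext) (simp only: w_def diff_add_cancel)
  ultimately show "in_list_span (acc @ [normalize w]) v" by (rule back_subst)
qed

lemma gram_schmidt_correct:
  assumes "orthonormal_list acc" and "\<forall>v\<in>set vs. supported v"
  shows "orthonormal_list (gram_schmidt acc vs) \<and> (\<exists>r. gram_schmidt acc vs = acc @ r)
     \<and> (\<forall>l\<in>set (gram_schmidt acc vs). in_list_span (acc @ vs) l)
     \<and> (\<forall>u\<in>set (acc @ vs). in_list_span (gram_schmidt acc vs) u)"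
  using assms
proof (induction vs arbitrary: acc)
  case Nil
  then show ?case by (auto intro: in_list_span_member)
next
  case (Cons v vs)
  define w where "w = (\<lambda>x. v x - proj acc v x)"
  have acc: "orthonormal_list acc" and v: "supported v" and vs: "\<forall>v\<in>set vs. supported v"
    using Cons.prems by auto
  have mono: "\<forall>x\<in>set (acc @ vs). in_list_span (acc @ v # vs) x" by (intro ballI in_list_span_member) auto
  show ?case
  proof (cases "inner w w = 0")
    case True
    have gs: "gram_schmidt acc (v # vs) = gram_schmidt acc vs" using True by (simp add: w_def Let_def)
    have "w = (\<lambda>x. 0)" using True inner_self_eq_0 supported_diff_proj[OF acc v] unfolding w_def by blast
    then have v_proj: "v = proj acc v" unfolding w_def by (metis (no_types, lifting) ext eq_iff_diff_eq_0)
    note IH = Cons.IH[OF acc vs]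
    have "in_list_span (gram_schmidt acc vs) (proj acc v)"
      unfolding proj_def by (rule in_span_lin_comb) (use IH in auto)
    then have "in_list_span (gram_schmidt acc vs) v" using v_proj by simp
    moreover have "\<forall>l\<in>set (gram_schmidt acc vs). in_list_span (acc @ v # vs) l"
      using IH mono by (blast intro: in_list_span_trans)
    ultimately show ?thesis unfolding gs using IH by auto
  next
    case False
    have gs: "gram_schmidt acc (v # vs) = gram_schmidt (acc @ [normalize w]) vs"
      using False by (simp add: w_def Let_def)
    note step = gram_schmidt_step[OF acc v, folded w_def, OF False]
    note IH = Cons.IH[OF step(1) vs]
    have "in_list_span (acc @ v # vs) (normalize w)"
      by (rule in_list_span_trans[OF _ step(2)]) (intro ballI in_list_span_member, auto)
    then have "\<forall>x\<in>set ((acc @ [normalize w]) @ vs). in_list_span (acc @ v # vs) x"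
      using mono by auto
    then have "\<forall>l\<in>set (gram_schmidt (acc @ [normalize w]) vs). in_list_span (acc @ v # vs) l"
      using IH by (blast intro: in_list_span_trans)
    moreover have "in_list_span (gram_schmidt (acc @ [normalize w]) vs) v"
      by (rule in_list_span_trans[OF _ step(3)]) (use IH in auto)
    ultimately show ?thesis unfolding gs using IH by auto
  qed
qed

end

section \<open>Hermitian operators\<close>

locale hermitian_operator = finite_l2 +
  fixes H :: "('a \<Rightarrow> complex) \<Rightarrow> 'a \<Rightarrow> complex"
  assumes H_linear: "H (\<lambda>x. a * u x + v x) = (\<lambda>x. a * H u x + H v x)"
    and H_supported: "supported (H u)"
    and H_self_adjoint: "inner u (H v) = inner (H u) v"
begin

lemma H_zero: "H (\<lambda>x. 0) = (\<lambda>x. 0)"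
  using H_linear[of 1 "\<lambda>x. 0" "\<lambda>x. 0"] by (simp add: fun_eq_iff)

lemma H_scale: "H (\<lambda>x. a * u x) = (\<lambda>x. a * H u x)"
  using H_linear[of a u "\<lambda>x. 0"] by (simp add: H_zero)

lemma H_add: "H (\<lambda>x. u x + v x) = (\<lambda>x. H u x + H v x)"
  using H_linear[of 1 u v] by simp

lemma H_lin_comb: "H (lin_comb k c b) = lin_comb k c (\<lambda>i. H (b i))"
proof (induction k)
  case 0
  then show ?case by (simp add: lin_comb_def H_zero)
next
  case (Suc k)
  have "lin_comb (Suc k) c b = (\<lambda>x. c k * b k x + lin_comb k c b x)" by (simp add: lin_comb_Suc add.commute)
  then have "H (lin_comb (Suc k) c b) = (\<lambda>x. c k * H (b k) x + H (lin_comb k c b) x)" by (simp only: H_linear)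
  then show ?case by (simp add: Suc lin_comb_Suc add.commute)
qed

lemma H_in_span: "\<forall>j<k. in_span k b (H (b j)) \<Longrightarrow> in_span k b u \<Longrightarrow> in_span k b (H u)"
  unfolding in_span_def[of k b u] by (auto simp: H_lin_comb intro: in_span_lin_comb)

lemma H_eigen_span:
  assumes "\<forall>i<k. H (b i) = (\<lambda>x. \<mu> * b i x)" "in_span k b u"
  shows "H u = (\<lambda>x. \<mu> * u x)"
proof -
  obtain c where c: "u = lin_comb k c b" using assms(2) in_span_def by blast
  have "H u = lin_comb k c (\<lambda>i x. \<mu> * b i x)" unfolding c H_lin_comb using assms(1) by (intro lin_comb_cong) auto
  then show ?thesis unfolding c lin_comb_def by (simp add: sum_distrib_left mult.left_commute)
qed

lemma eigenvalue_real:
  assumes "supported e" "e \<noteq> (\<lambda>x. 0)" "H e = (\<lambda>x. \<mu> * e x)"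
  shows "\<mu> = complex_of_real (Re \<mu>)"
proof -
  have "\<mu> * inner e e = inner e (H e)" using assms(3) by (simp add: inner_scale_right)
  also have "\<dots> = inner (H e) e" by (rule H_self_adjoint)
  also have "\<dots> = cnj \<mu> * inner e e" unfolding assms(3) by (rule inner_scale_left)
  finally have "\<mu> = cnj \<mu>" using inner_self_pos[OF assms(1,2)] by auto
  then show ?thesis by (simp add: complex_eq_iff)
qed

lemma eigenvector_in_span:
  assumes b: "orthonormal k b" and k: "k > 0" and inv: "\<forall>j<k. in_span k b (H (b j))"
  obtains l e where "in_span k b e" "supported e" "e \<noteq> (\<lambda>x. 0)" "H e = (\<lambda>x. complex_of_real l * e x)"
proof -
  define M where "M = mat k k (\<lambda>(i, j). inner (b i) (H (b j)))"
  have M: "M \<in> carrier_mat k k" unfolding M_def by simp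
  obtain \<mu> c where c: "c \<in> carrier_vec k" "c \<noteq> 0\<^sub>v k" "M *\<^sub>v c = \<mu> \<cdot>\<^sub>v c"
    using complex_mat_has_eigenvector[OF M k] by blast
  define e where "e = lin_comb k (\<lambda>i. c $ i) b"
  have se: "supported e" unfolding e_def by (rule supported_lin_comb) (use b in \<open>auto simp: orthonormal_supported\<close>)
  have Mc: "(\<Sum>j<k. M $$ (i, j) * c $ j) = \<mu> * c $ i" if "i < k" for i
  proof -
    have "(M *\<^sub>v c) $ i = (\<Sum>j<k. M $$ (i, j) * c $ j)"
      using that M c(1) by (auto simp: scalar_prod_def lessThan_atLeast0 row_def)
    then show ?thesis using c(1,3) that by simp
  qed
  have Hb: "H (b j) = lin_comb k (\<lambda>i. M $$ (i, j)) b" if "j < k" for j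
  proof -
    have "lin_comb k (\<lambda>i. inner (b i) (H (b j))) b = lin_comb k (\<lambda>i. M $$ (i, j)) b"
      by (rule lin_comb_cong) (use that in \<open>auto simp: M_def\<close>)
    then show ?thesis using orthonormal_expansion[OF b inv[rule_format, OF that]] by simp
  qed
  have He: "H e = (\<lambda>x. \<mu> * e x)"
  proof
    fix x
    have "H e x = (\<Sum>j<k. c $ j * H (b j) x)" unfolding e_def H_lin_comb by (simp add: lin_comb_def)
    also have "\<dots> = (\<Sum>j<k. \<Sum>i<k. M $$ (i, j) * c $ j * b i x)"
      by (intro sum.cong refl) (simp add: Hb lin_comb_def sum_distrib_left ac_simps)
    also have "\<dots> = (\<Sum>i<k. \<Sum>j<k. M $$ (i, j) * c $ j * b i x)" by (rule sum.swap)
    also have "\<dots> = (\<Sum>i<k. \<mu> * c $ i * b i x)"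
      by (intro sum.cong refl) (simp add: Mc flip: sum_distrib_right)
    also have "\<dots> = \<mu> * e x" unfolding e_def lin_comb_def by (simp add: sum_distrib_left mult.assoc)
    finally show "H e x = \<mu> * e x" .
  qed
  obtain i where i: "i < k" "c $ i \<noteq> 0" using nonzero_vec_has_nonzero_entry[OF c(1,2)] .
  have "inner (b i) e = c $ i" unfolding e_def by (rule inner_basis_lin_comb[OF b i(1)])
  then have e0: "e \<noteq> (\<lambda>x. 0)" using i(2) inner_def by auto
  show ?thesis
    by (rule that[of e "Re \<mu>"]) (use e0 se He eigenvalue_real[OF se e0 He] in \<open>auto simp: in_span_def e_def\<close>)
qed

lemma split_off_eigenvector:
  assumes b: "orthonormal k b" and inv: "\<forall>j<k. in_span k b (H (b j))"
    and e: "in_span k b e" "supported e" "inner e e = 1" "H e = (\<lambda>x. complex_of_real l * e x)"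
  obtains r where "length r < k" "orthonormal_list r" "\<forall>j<length r. in_list_span r (H (r ! j))"
    "\<forall>i<length r. inner e (r ! i) = 0"
    "\<And>u. in_span k b u \<Longrightarrow> u = (\<lambda>y. inner e u * e y + lin_comb (length r) (\<lambda>i. inner (r ! i) u) ((!) r) y)"
proof -
  define bl where "bl = map b [0..<k]"
  have bl: "length bl = k" "\<And>i. i < k \<Longrightarrow> bl ! i = b i" unfolding bl_def by auto
  have span_bl: "in_span k b u = in_list_span bl u" for u using in_span_cong[of k b "(!) bl" u] bl by metis
  define L where "L = gram_schmidt [e] bl"
  have "orthonormal_list [e]" using e unfolding orthonormal_def by auto
  moreover have "\<forall>v\<in>set bl. supported v" using b unfolding bl_def by (auto simp: orthonormal_supported)
  ultimately have gs: "orthonormal_list L \<and> (\<exists>r. L = [e] @ r) \<and> (\<forall>l\<in>set L. in_list_span ([e] @ bl) l)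
     \<and> (\<forall>u\<in>set ([e] @ bl). in_list_span L u)"
    unfolding L_def by (rule gram_schmidt_correct)
  obtain r where Lr: "L = e # r" using gs by auto
  have L: "orthonormal_list L" using gs by blast
  have "in_list_span bl e" using e(1) span_bl by simp
  then have "\<forall>y\<in>set ([e] @ bl). in_list_span bl y" by (auto intro: in_list_span_member)
  then have L_in_b: "\<forall>x\<in>set L. in_span k b x" unfolding span_bl using gs by (blast intro: in_list_span_trans)
  have b_in_L: "in_span k b u \<Longrightarrow> in_list_span L u" for u
    using gs span_bl in_list_span_trans[of bl L] by auto
  have "length L \<le> k" by (rule orthonormal_in_span_le[OF b L]) (use L_in_b in auto)
  then have "length r < k" using Lr by simp
  moreover note r = orthonormal_list_ConsD[OF L[unfolded Lr]]
  moreover have expand: "u = (\<lambda>y. inner e u * e y + lin_comb (length r) (\<lambda>i. inner (r ! i) u) ((!) r) y)"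
    if "in_span k b u" for u
    using orthonormal_expansion[OF L b_in_L[OF that]] unfolding Lr by (simp add: lin_comb_Cons)
  moreover have "\<forall>j<length r. in_list_span r (H (r ! j))"
  proof (intro allI impI)
    fix j assume j: "j < length r"
    have "in_span k b (H (r ! j))" using H_in_span[OF inv] L_in_b j unfolding Lr by auto
    moreover have "inner e (H (r ! j)) = 0"
      using r(2) j e(4) by (simp add: H_self_adjoint inner_scale_left)
    ultimately have "H (r ! j) = lin_comb (length r) (\<lambda>i. inner (r ! i) (H (r ! j))) ((!) r)"
      using expand by fastforce
    then show "in_list_span r (H (r ! j))" unfolding in_span_def by blast
  qed
  ultimately show ?thesis using that by blast
qed

lemma rayleigh_orthogonal_split:
  fixes \<alpha> :: complex
  assumes e: "inner e e = 1" "H e = (\<lambda>x. complex_of_real l * e x)" and v': "inner e v' = 0"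
  defines "v \<equiv> (\<lambda>y. \<alpha> * e y + v' y)"
  shows "Re (inner v (H v)) = (cmod \<alpha>)^2 * l + Re (inner v' (H v'))"
    and "Re (inner v v) = (cmod \<alpha>)^2 + Re (inner v' v')"
proof -
  have v'e: "inner v' e = 0" using inner_eq_0_sym[OF v'] .
  have eHv': "inner e (H v') = 0" using v' e(2) by (simp add: H_self_adjoint inner_scale_left)
  have "H v = (\<lambda>y. \<alpha> * (complex_of_real l * e y) + H v' y)" unfolding v_def by (simp add: H_add H_scale e(2))
  then have "inner v (H v) = cnj \<alpha> * \<alpha> * complex_of_real l + inner v' (H v')"
    unfolding v_def by (simp add: inner_add_left inner_add_right inner_scale_left inner_scale_right
      e(1) eHv' v'e mult.assoc)
  then show "Re (inner v (H v)) = (cmod \<alpha>)^2 * l + Re (inner v' (H v'))" by (simp add: cnj_mult_self)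
  have "inner v v = cnj \<alpha> * \<alpha> + inner v' v'"
    unfolding v_def by (simp add: inner_add_left inner_add_right inner_scale_left inner_scale_right e(1) v' v'e)
  then show "Re (inner v v) = (cmod \<alpha>)^2 + Re (inner v' v')" by (simp add: cnj_mult_self)
qed

(* By induction on the dimension of an invariant span: split off one eigenvector and recurse on
   its orthogonal complement. *)

lemma eigenvalue_ge_rayleigh_in_span:
  "orthonormal k b \<Longrightarrow> \<forall>j<k. in_span k b (H (b j)) \<Longrightarrow> in_span k b v \<Longrightarrow> supported v \<Longrightarrow> v \<noteq> (\<lambda>x. 0) \<Longrightarrow>
   \<exists>l e. supported e \<and> e \<noteq> (\<lambda>x. 0) \<and> H e = (\<lambda>x. complex_of_real l * e x) \<and>
     Re (inner v (H v)) \<le> l * Re (inner v v)"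
proof (induction k arbitrary: b v rule: less_induct)
  case (less k)
  note b = less.prems(1) and inv = less.prems(2) and v = less.prems(3-5)
  have "k > 0" using v(1,3) in_span_0 by (cases k) auto
  then obtain l e0 where e0: "in_span k b e0" "supported e0" "e0 \<noteq> (\<lambda>x. 0)" "H e0 = (\<lambda>x. complex_of_real l * e0 x)"
    using eigenvector_in_span[OF b _ inv] by blast
  define e where "e = normalize e0"
  have "in_span k b e" unfolding e_def normalize_def by (rule in_span_scale[OF e0(1)])
  moreover have "H e = (\<lambda>x. complex_of_real l * e x)"
    unfolding e_def normalize_def H_scale e0(4) by (simp only: mult.left_commute)
  ultimately have e: "in_span k b e" "supported e" "inner e e = 1" "H e = (\<lambda>x. complex_of_real l * e x)"
    unfolding e_def using inner_normalize[OF e0(2,3)] supported_normalize[OF e0(2)] by simp_all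
  have e_ne: "e \<noteq> (\<lambda>x. 0)" using e(3) inner_zero_left by force
  obtain r where r: "length r < k" "orthonormal_list r" "\<forall>j<length r. in_list_span r (H (r ! j))"
    "\<forall>i<length r. inner e (r ! i) = 0"
    "\<And>u. in_span k b u \<Longrightarrow> u = (\<lambda>y. inner e u * e y + lin_comb (length r) (\<lambda>i. inner (r ! i) u) ((!) r) y)"
    using split_off_eigenvector[OF b inv e] by blast
  define \<alpha> where "\<alpha> = inner e v"
  define v' where "v' = lin_comb (length r) (\<lambda>i. inner (r ! i) v) ((!) r)"
  have v_split: "v = (\<lambda>y. \<alpha> * e y + v' y)" unfolding \<alpha>_def v'_def by (rule r(5)[OF v(1)])
  have v': "supported v'" "in_list_span r v'" "inner e v' = 0"
    unfolding v'_def in_span_def using r(2,4)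
    by (auto intro!: supported_lin_comb simp: orthonormal_supported inner_lin_comb_right)
  define a where "a = (cmod \<alpha>)^2"
  note split = rayleigh_orthogonal_split[OF e(3,4) v'(3), of \<alpha>, folded v_split a_def]
  show ?case
  proof (cases "v' = (\<lambda>x. 0)")
    case True
    then have "Re (inner v (H v)) = l * Re (inner v v)" using split by (simp add: H_zero inner_zero_left)
    then show ?thesis using e e_ne by auto
  next
    case False
    obtain l' e' where e': "supported e'" "e' \<noteq> (\<lambda>x. 0)" "H e' = (\<lambda>x. complex_of_real l' * e' x)"
      "Re (inner v' (H v')) \<le> l' * Re (inner v' v')"
      using less.IH[OF r(1,2,3) v'(2,1) False] by blast
    have "a \<ge> 0" "Re (inner v' v') \<ge> 0" unfolding a_def by (simp_all add: inner_self_nonneg)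
    then have "Re (inner v (H v)) \<le> max l l' * Re (inner v v)"
      using split e'(4) mult_right_mono[of l "max l l'" a] mult_right_mono[of l' "max l l'" "Re (inner v' v')"]
      by (simp add: algebra_simps)
    then show ?thesis using e e_ne e' by (cases "l' \<le> l") (auto simp: max_def)
  qed
qed

lemma eigenvalue_ge_rayleigh:
  assumes "supported v" "v \<noteq> (\<lambda>x. 0)"
  obtains l e where "supported e" "e \<noteq> (\<lambda>x. 0)" "H e = (\<lambda>x. complex_of_real l * e x)"
    "Re (inner v (H v)) \<le> l * Re (inner v v)"
proof -
  obtain k b where b: "orthonormal k b" "\<forall>u. supported u \<longrightarrow> in_span k b u" using point_basis by blast
  show ?thesis
    using eigenvalue_ge_rayleigh_in_span[OF b(1) _ _ assms] b(2) H_supported assms(1) that by blast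
qed

end

section \<open>The correlation operator of a function on a finite group\<close>

locale group_correlation = group G for G :: "('a, 'b) monoid_scheme" (structure) +
  fixes f :: "'a \<Rightarrow> int"
  assumes finite_carrier: "finite (carrier G)"
begin

sublocale finite_l2 "carrier G"
  by unfold_locales (rule finite_carrier)

definition rtrans :: "'a \<Rightarrow> ('a \<Rightarrow> complex) \<Rightarrow> 'a \<Rightarrow> complex" where
  "rtrans g u = (\<lambda>x. if x \<in> carrier G then u (x \<otimes> g) else 0)"

(* corr, corr_adj and corr_gram are the operators A, A\<^sup>* (see inner_corr_adj) and A\<^sup>*A of the
   proof sketch above. *)

definition corr :: "('a \<Rightarrow> complex) \<Rightarrow> 'a \<Rightarrow> complex" where
  "corr u = (\<lambda>y. if y \<in> carrier G then \<Sum>x\<in>carrier G. of_int (f x) * u (x \<otimes> y) else 0)"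

definition corr_adj :: "('a \<Rightarrow> complex) \<Rightarrow> 'a \<Rightarrow> complex" where
  "corr_adj u = (\<lambda>z. if z \<in> carrier G then \<Sum>y\<in>carrier G. of_int (f (z \<otimes> inv y)) * u y else 0)"

definition corr_gram :: "('a \<Rightarrow> complex) \<Rightarrow> 'a \<Rightarrow> complex" where
  "corr_gram u = corr_adj (corr u)"

lemma supported_rtrans [simp]: "supported (rtrans g u)"
  and supported_corr_gram [simp]: "supported (corr_gram u)"
  unfolding supported_def rtrans_def corr_adj_def corr_gram_def by auto

lemma corr_linear: "corr (\<lambda>x. a * u x + v x) = (\<lambda>x. a * corr u x + corr v x)"
  unfolding corr_def by (auto simp: sum.distrib sum_distrib_left ring_distribs mult.left_commute)

lemma corr_adj_linear: "corr_adj (\<lambda>x. a * u x + v x) = (\<lambda>x. a * corr_adj u x + corr_adj v x)"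
  unfolding corr_adj_def by (auto simp: sum.distrib sum_distrib_left ring_distribs mult.left_commute)

lemma corr_adj_scale: "corr_adj (\<lambda>x. a * u x) = (\<lambda>x. a * corr_adj u x)"
  unfolding corr_adj_def by (auto simp: sum_distrib_left mult.left_commute)

lemma inner_corr_adj: "inner u (corr_adj w) = inner (corr u) w"
proof -
  have shift: "(\<Sum>x\<in>carrier G. of_int (f x) * cnj (u (x \<otimes> y))) =
      (\<Sum>z\<in>carrier G. of_int (f (z \<otimes> inv y)) * cnj (u z))" if y: "y \<in> carrier G" for y
    using sum_mult_right[OF y, of "\<lambda>z. of_int (f (z \<otimes> inv y)) * cnj (u z)"] y by (simp add: m_assoc)
  have "inner (corr u) w = (\<Sum>y\<in>carrier G. \<Sum>z\<in>carrier G. cnj (u z) * (of_int (f (z \<otimes> inv y)) * w y))"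
    unfolding inner_def corr_def
    by (intro sum.cong refl) (simp add: shift sum_distrib_left sum_distrib_right mult.commute mult.left_commute)
  also have "\<dots> = (\<Sum>z\<in>carrier G. \<Sum>y\<in>carrier G. cnj (u z) * (of_int (f (z \<otimes> inv y)) * w y))"
    by (rule sum.swap)
  also have "\<dots> = inner u (corr_adj w)" unfolding inner_def corr_adj_def by (simp add: sum_distrib_left)
  finally show ?thesis by simp
qed

lemma inner_corr_gram: "inner u (corr_gram v) = inner (corr u) (corr v)"
  unfolding corr_gram_def by (rule inner_corr_adj)

sublocale corr_gram: hermitian_operator "carrier G" corr_gram
proof
  show "corr_gram (\<lambda>x. a * u x + v x) = (\<lambda>x. a * corr_gram u x + corr_gram v x)" for a u v
    unfolding corr_gram_def by (simp add: corr_linear corr_adj_linear)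
  show "inner u (corr_gram v) = inner (corr_gram u) v" for u v
    by (metis inner_cnj inner_corr_gram)
qed simp

lemma rtrans_rtrans: "g \<in> carrier G \<Longrightarrow> h \<in> carrier G \<Longrightarrow> rtrans g (rtrans h u) = rtrans (g \<otimes> h) u"
  unfolding rtrans_def by (rule ext) (auto simp: m_assoc)

lemma rtrans_one: "supported u \<Longrightarrow> rtrans \<one> u = u"
  unfolding rtrans_def supported_def by (rule ext) auto

lemma rtrans_lin_comb: "rtrans g (lin_comb k c b) = lin_comb k c (\<lambda>i. rtrans g (b i))"
  unfolding rtrans_def lin_comb_def by (rule ext) auto

lemma rtrans_scale: "rtrans g (\<lambda>x. a * u x) = (\<lambda>x. a * rtrans g u x)"
  unfolding rtrans_def by auto

lemma in_span_rtrans: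
  "\<forall>i<k. in_span k' b' (rtrans g (b i)) \<Longrightarrow> in_span k b u \<Longrightarrow> in_span k' b' (rtrans g u)"
  unfolding in_span_def[of k b u] by (auto simp: rtrans_lin_comb intro: in_span_lin_comb)

lemma inner_rtrans: assumes g: "g \<in> carrier G" shows "inner (rtrans g u) v = inner u (rtrans (inv g) v)"
proof -
  have "inner u (rtrans (inv g) v) = (\<Sum>x\<in>carrier G. cnj (u x) * v (x \<otimes> inv g))"
    unfolding inner_def rtrans_def by (intro sum.cong) auto
  also have "\<dots> = (\<Sum>x\<in>carrier G. cnj (u (x \<otimes> g)) * v (x \<otimes> g \<otimes> inv g))"
    using sum_mult_right[OF g, of "\<lambda>x. cnj (u x) * v (x \<otimes> inv g)"] by simp
  also have "\<dots> = inner (rtrans g u) v"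
    unfolding inner_def rtrans_def using g by (intro sum.cong) (auto simp: m_assoc)
  finally show ?thesis by simp
qed

lemma corr_rtrans: "g \<in> carrier G \<Longrightarrow> corr (rtrans g u) = rtrans g (corr u)"
  unfolding corr_def rtrans_def by (rule ext) (auto simp: m_assoc intro!: sum.cong)

lemma corr_adj_rtrans: assumes g: "g \<in> carrier G" shows "corr_adj (rtrans g u) = rtrans g (corr_adj u)"
proof (rule ext)
  fix z
  show "corr_adj (rtrans g u) z = rtrans g (corr_adj u) z"
  proof (cases "z \<in> carrier G")
    case True
    have "rtrans g (corr_adj u) z = (\<Sum>y\<in>carrier G. of_int (f (z \<otimes> g \<otimes> inv y)) * u y)"
      unfolding rtrans_def corr_adj_def using True g by simp
    also have "\<dots> = (\<Sum>y\<in>carrier G. of_int (f (z \<otimes> g \<otimes> inv (y \<otimes> g))) * u (y \<otimes> g))"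
      using sum_mult_right[OF g, of "\<lambda>y. of_int (f (z \<otimes> g \<otimes> inv y)) * u y"] by simp
    also have "\<dots> = corr_adj (rtrans g u) z"
      unfolding rtrans_def corr_adj_def using True g
      by (auto simp: mult_inv_mult_right intro!: sum.cong)
    finally show ?thesis by simp
  qed (simp add: corr_adj_def rtrans_def)
qed

lemma corr_gram_rtrans: "g \<in> carrier G \<Longrightarrow> corr_gram (rtrans g u) = rtrans g (corr_gram u)"
  unfolding corr_gram_def by (simp add: corr_rtrans corr_adj_rtrans)

lemma corr_const_one:
  assumes "(\<Sum>x\<in>carrier G. f x) = 0"
  shows "corr (\<lambda>x. of_bool (x \<in> carrier G)) = (\<lambda>x. 0)"
proof
  fix y
  have "corr (\<lambda>x. of_bool (x \<in> carrier G)) y = (if y \<in> carrier G then of_int (\<Sum>x\<in>carrier G. f x) else 0)"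
    unfolding corr_def by (auto intro!: sum.cong)
  then show "corr (\<lambda>x. of_bool (x \<in> carrier G)) y = 0" using assms by simp
qed

definition invariant_eigenbasis :: "real \<Rightarrow> nat \<Rightarrow> (nat \<Rightarrow> 'a \<Rightarrow> complex) \<Rightarrow> bool" where
  "invariant_eigenbasis l m b \<longleftrightarrow> m > 0 \<and> orthonormal m b
     \<and> (\<forall>i<m. corr_gram (b i) = (\<lambda>x. complex_of_real l * b i x))
     \<and> (\<forall>g\<in>carrier G. \<forall>i<m. in_span m b (rtrans g (b i)))"

lemma invariant_eigenbasis_of_orbit:
  assumes u: "supported u" "u \<noteq> (\<lambda>x. 0)" "corr_gram u = (\<lambda>x. complex_of_real l * u x)"
  obtains L orbit where "invariant_eigenbasis l (length L) ((!) L)" "in_list_span L u"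
    and "set orbit \<subseteq> (\<lambda>g. rtrans g u) ` carrier G" "\<forall>x\<in>set L. in_list_span orbit x"
proof -
  obtain gs where gs: "set gs = carrier G" using finite_list[OF finite_carrier] by blast
  define orbit where "orbit = map (\<lambda>g. rtrans g u) gs"
  define L where "L = gram_schmidt [] orbit"
  have "orthonormal_list []" unfolding orthonormal_def by simp
  moreover have "\<forall>v\<in>set orbit. supported v" unfolding orbit_def by auto
  ultimately have "orthonormal_list L \<and> (\<forall>x\<in>set L. in_list_span orbit x) \<and> (\<forall>x\<in>set orbit. in_list_span L x)"
    unfolding L_def using gram_schmidt_correct by fastforce
  then have L: "orthonormal_list L" and L_orbit: "\<forall>x\<in>set L. in_list_span orbit x"
    and orbit_L: "\<forall>x\<in>set orbit. in_list_span L x" by blast+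
  have "u \<in> set orbit" unfolding orbit_def using gs rtrans_one[OF u(1)] by (metis image_eqI image_set one_closed)
  then have uL: "in_list_span L u" using orbit_L by blast
  have "L \<noteq> []" using uL u(2) in_span_0 by (metis list.size(3))
  have orbit_nth: "orbit ! j = rtrans (gs ! j) u" "gs ! j \<in> carrier G" if "j < length orbit" for j
    using that gs nth_mem unfolding orbit_def by auto
  have "\<forall>i<length L. corr_gram (L ! i) = (\<lambda>x. complex_of_real l * (L ! i) x)"
  proof (intro allI impI)
    fix i assume "i < length L"
    have "\<forall>j<length orbit. corr_gram (orbit ! j) = (\<lambda>x. complex_of_real l * (orbit ! j) x)"
      using orbit_nth by (simp add: corr_gram_rtrans u(3) rtrans_scale)
    then show "corr_gram (L ! i) = (\<lambda>x. complex_of_real l * (L ! i) x)"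
      using L_orbit \<open>i < length L\<close> corr_gram.H_eigen_span by (meson nth_mem)
  qed
  moreover have "\<forall>g\<in>carrier G. \<forall>i<length L. in_list_span L (rtrans g (L ! i))"
  proof (intro ballI allI impI)
    fix g i assume g: "g \<in> carrier G" and i: "i < length L"
    have "rtrans g (orbit ! j) \<in> set orbit" if j: "j < length orbit" for j
    proof -
      have "rtrans g (orbit ! j) = rtrans (g \<otimes> gs ! j) u" using orbit_nth[OF j] g by (simp add: rtrans_rtrans)
      moreover have "rtrans (g \<otimes> gs ! j) u \<in> set orbit" unfolding orbit_def using gs g orbit_nth(2)[OF j] by simp
      ultimately show ?thesis by simp
    qed
    then have "in_list_span orbit (rtrans g (L ! i))"
      using L_orbit i in_span_rtrans in_list_span_member by (meson nth_mem)
    then show "in_list_span L (rtrans g (L ! i))" using orbit_L in_list_span_trans by blast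
  qed
  ultimately have "invariant_eigenbasis l (length L) ((!) L)"
    unfolding invariant_eigenbasis_def using L \<open>L \<noteq> []\<close> by auto
  moreover have "set orbit \<subseteq> (\<lambda>g. rtrans g u) ` carrier G" unfolding orbit_def using gs by auto
  ultimately show ?thesis using that uL L_orbit by blast
qed

definition corr_kernel :: "'a \<Rightarrow> 'a \<Rightarrow> complex" where
  "corr_kernel y = (\<lambda>z. if z \<in> carrier G then complex_of_int (f (z \<otimes> inv y)) else 0)"

lemma corr_eq_inner_kernel: assumes y: "y \<in> carrier G" shows "corr u y = inner (corr_kernel y) u"
proof -
  have "inner (corr_kernel y) u = (\<Sum>z\<in>carrier G. complex_of_int (f (z \<otimes> inv y)) * u z)"
    unfolding inner_def corr_kernel_def by (intro sum.cong refl) simp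
  also have "\<dots> = (\<Sum>x\<in>carrier G. complex_of_int (f (x \<otimes> y \<otimes> inv y)) * u (x \<otimes> y))"
    by (rule sum_mult_right[OF y, symmetric])
  also have "\<dots> = corr u y" unfolding corr_def using y by (simp add: m_assoc)
  finally show ?thesis by simp
qed

lemma inner_sign_fun:
  assumes "\<forall>x\<in>carrier G. s x = 1 \<or> s x = -1"
  shows "Re (inner (\<lambda>x. if x \<in> carrier G then complex_of_int (s x) else 0) (\<lambda>x. if x \<in> carrier G then complex_of_int (s x) else 0))
    = real (card (carrier G))"
proof -
  have "(cmod (if x \<in> carrier G then complex_of_int (s x) else 0))^2 = 1" if "x \<in> carrier G" for x
    using assms that by fastforce
  then show ?thesis by (simp add: inner_self)
qed

(* Writing (corr u) y = \<langle>k\<^sub>y, u\<rangle> with the kernel k\<^sub>y = corr_kernel y, the trace of corr_gram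
   over an orthonormal family is \<Sum>\<^sub>t \<Sum>\<^sub>y |\<langle>w\<^sub>t, k\<^sub>y\<rangle>|\<^sup>2, which Bessel's inequality bounds by
   \<Sum>\<^sub>y \<parallel>k\<^sub>y\<parallel>\<^sup>2 = |G|\<^sup>2. *)

lemma orthonormal_eigenvectors_bound:
  assumes sign: "\<forall>x\<in>carrier G. f x = 1 \<or> f x = -1"
    and w: "orthonormal K w" and eigen: "\<forall>t<K. corr_gram (w t) = (\<lambda>x. complex_of_real l * w t x)"
  shows "real K * l \<le> (real (card (carrier G)))^2"
proof -
  have "real K * l = (\<Sum>t<K. Re (inner (w t) (corr_gram (w t))))"
    using eigen w by (simp add: inner_scale_right orthonormal_inner)
  also have "\<dots> = (\<Sum>t<K. \<Sum>y\<in>carrier G. (cmod (inner (w t) (corr_kernel y)))^2)"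
  proof (intro sum.cong refl)
    fix t
    have "Re (inner (w t) (corr_gram (w t))) = (\<Sum>y\<in>carrier G. (cmod (corr (w t) y))^2)"
      by (simp add: inner_corr_gram inner_self)
    also have "\<dots> = (\<Sum>y\<in>carrier G. (cmod (inner (w t) (corr_kernel y)))^2)"
      by (intro sum.cong refl) (metis corr_eq_inner_kernel complex_mod_cnj inner_cnj)
    finally show "Re (inner (w t) (corr_gram (w t))) = (\<Sum>y\<in>carrier G. (cmod (inner (w t) (corr_kernel y)))^2)" .
  qed
  also have "\<dots> = (\<Sum>y\<in>carrier G. \<Sum>t<K. (cmod (inner (w t) (corr_kernel y)))^2)" by (rule sum.swap)
  also have "\<dots> \<le> (\<Sum>y\<in>carrier G. Re (inner (corr_kernel y) (corr_kernel y)))"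
    by (intro sum_mono bessel[OF w])
  also have "\<dots> = (\<Sum>y\<in>carrier G. real (card (carrier G)))"
  proof (intro sum.cong refl)
    fix y assume y: "y \<in> carrier G"
    have "\<forall>z\<in>carrier G. f (z \<otimes> inv y) = 1 \<or> f (z \<otimes> inv y) = -1" using sign y by simp
    then show "Re (inner (corr_kernel y) (corr_kernel y)) = real (card (carrier G))"
      unfolding corr_kernel_def by (rule inner_sign_fun)
  qed
  finally show ?thesis by (simp add: power2_eq_square)
qed

end

section \<open>The representation on a minimal invariant eigenspace\<close>

locale minimal_eigenbasis = group_correlation +
  fixes l :: real and m :: nat and b :: "nat \<Rightarrow> 'a \<Rightarrow> complex"
  assumes basis: "invariant_eigenbasis l m b"
    and minimal: "\<And>m' b'. invariant_eigenbasis l m' b' \<Longrightarrow> m \<le> m'"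
begin

lemma m_pos: "m > 0" and b_orthonormal: "orthonormal m b"
  and b_eigen: "\<And>i. i < m \<Longrightarrow> corr_gram (b i) = (\<lambda>x. complex_of_real l * b i x)"
  and b_rtrans: "\<And>g i. g \<in> carrier G \<Longrightarrow> i < m \<Longrightarrow> in_span m b (rtrans g (b i))"
  using basis unfolding invariant_eigenbasis_def by auto

definition rho :: "'a \<Rightarrow> complex mat" where
  "rho g = mat m m (\<lambda>(i, j). inner (b i) (rtrans g (b j)))"

lemma rho_carrier [simp]: "rho g \<in> carrier_mat m m"
  and rho_dim [simp]: "dim_row (rho g) = m" "dim_col (rho g) = m"
  unfolding rho_def by simp_all

lemma rho_entry: "i < m \<Longrightarrow> j < m \<Longrightarrow> rho g $$ (i, j) = inner (b i) (rtrans g (b j))"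
  unfolding rho_def by simp

lemma rtrans_basis: assumes g: "g \<in> carrier G" and j: "j < m"
  shows "rtrans g (b j) = lin_comb m (\<lambda>i. rho g $$ (i, j)) b"
proof -
  have "rtrans g (b j) = lin_comb m (\<lambda>i. inner (b i) (rtrans g (b j))) b"
    by (rule orthonormal_expansion[OF b_orthonormal b_rtrans[OF g j]])
  also have "\<dots> = lin_comb m (\<lambda>i. rho g $$ (i, j)) b" using j by (intro lin_comb_cong) (auto simp: rho_entry)
  finally show ?thesis .
qed

lemma rho_rep: "is_rep G m rho"
proof -
  have one: "rho \<one> = 1\<^sub>m m"
    by (rule eq_matI) (auto simp: rho_entry rtrans_one orthonormal_supported[OF b_orthonormal]
        orthonormal_inner[OF b_orthonormal])
  have mult: "rho (g \<otimes> h) = rho g * rho h" if g: "g \<in> carrier G" and h: "h \<in> carrier G" for g h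
  proof (rule eq_matI)
    fix i j assume "i < dim_row (rho g * rho h)" "j < dim_col (rho g * rho h)"
    then have i: "i < m" and j: "j < m" by simp_all
    have "rho (g \<otimes> h) $$ (i, j) = inner (b i) (rtrans (g \<otimes> h) (b j))" by (rule rho_entry[OF i j])
    also have "\<dots> = inner (b i) (rtrans g (rtrans h (b j)))" by (simp only: rtrans_rtrans[OF g h])
    also have "\<dots> = inner (b i) (lin_comb m (\<lambda>p. rho h $$ (p, j)) (\<lambda>p. rtrans g (b p)))"
      by (simp only: rtrans_basis[OF h j] rtrans_lin_comb)
    also have "\<dots> = (\<Sum>p<m. rho h $$ (p, j) * rho g $$ (i, p))"
      unfolding inner_lin_comb_right using i by (intro sum.cong refl) (simp add: rho_entry)
    also have "\<dots> = (rho g * rho h) $$ (i, j)"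
      using mat_mult_entry[OF rho_carrier rho_carrier i j] by (simp add: mult.commute)
    finally show "rho (g \<otimes> h) $$ (i, j) = (rho g * rho h) $$ (i, j)" .
  qed (simp_all only: rho_dim index_mult_mat)
  show ?thesis unfolding is_rep_def using one mult by auto
qed

lemma rho_inv_entry: assumes g: "g \<in> carrier G" and i: "i < m" and j: "j < m"
  shows "rho (inv g) $$ (i, j) = cnj (rho g $$ (j, i))"
proof -
  have "rho (inv g) $$ (i, j) = inner (b i) (rtrans (inv g) (b j))" by (rule rho_entry[OF i j])
  also have "\<dots> = inner (rtrans g (b i)) (b j)" by (rule inner_rtrans[OF g, symmetric])
  also have "\<dots> = cnj (inner (b j) (rtrans g (b i)))" by (rule inner_cnj[symmetric])
  also have "\<dots> = cnj (rho g $$ (j, i))" using rho_entry[OF j i] by simp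
  finally show ?thesis .
qed

definition vec_fun :: "complex vec \<Rightarrow> 'a \<Rightarrow> complex" where
  "vec_fun v = lin_comb m (\<lambda>i. v $ i) b"

lemma rtrans_vec_fun:
  assumes g: "g \<in> carrier G" and w: "w \<in> carrier_vec m"
  shows "rtrans g (vec_fun w) = vec_fun (rho g *\<^sub>v w)"
proof
  fix x
  have "rtrans g (vec_fun w) = lin_comb m (\<lambda>j. w $ j) (\<lambda>j. lin_comb m (\<lambda>i. rho g $$ (i, j)) b)"
    unfolding vec_fun_def rtrans_lin_comb using rtrans_basis[OF g] by (intro lin_comb_cong) auto
  then have "rtrans g (vec_fun w) x = (\<Sum>j<m. \<Sum>i<m. w $ j * rho g $$ (i, j) * b i x)"
    by (simp add: lin_comb_def sum_distrib_left mult.assoc)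
  also have "\<dots> = (\<Sum>i<m. \<Sum>j<m. w $ j * rho g $$ (i, j) * b i x)" by (rule sum.swap)
  also have "\<dots> = (\<Sum>i<m. (\<Sum>j<m. rho g $$ (i, j) * w $ j) * b i x)"
    by (intro sum.cong refl) (simp add: sum_distrib_left sum_distrib_right ac_simps)
  also have "\<dots> = vec_fun (rho g *\<^sub>v w) x"
    unfolding vec_fun_def lin_comb_def using w
    by (intro sum.cong refl) (auto simp: scalar_prod_def lessThan_atLeast0 row_def mult.commute)
  finally show "rtrans g (vec_fun w) x = vec_fun (rho g *\<^sub>v w) x" .
qed

lemma vec_fun_inj:
  assumes "v \<in> carrier_vec m" "v' \<in> carrier_vec m" "vec_fun v = vec_fun v'"
  shows "v = v'"
proof (rule eq_vecI)
  fix i assume "i < dim_vec v'"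
  then have i: "i < m" using assms(2) by auto
  show "v $ i = v' $ i"
    using inner_basis_lin_comb[OF b_orthonormal i, of "\<lambda>i. v $ i"]
      inner_basis_lin_comb[OF b_orthonormal i, of "\<lambda>i. v' $ i"] assms(3)
    by (simp add: vec_fun_def)
qed (use assms in auto)

lemma vec_fun_nonzero:
  assumes "w \<in> carrier_vec m" "w \<noteq> 0\<^sub>v m"
  shows "vec_fun w \<noteq> (\<lambda>x. 0)"
proof -
  obtain i where i: "i < m" "w $ i \<noteq> 0" using nonzero_vec_has_nonzero_entry[OF assms] .
  have "inner (b i) (vec_fun w) = w $ i" unfolding vec_fun_def by (rule inner_basis_lin_comb[OF b_orthonormal i(1)])
  then show ?thesis using i(2) inner_def by auto
qed

lemma span_in_vec_fun_image:
  assumes W: "is_subspace m W" and X: "set X \<subseteq> vec_fun ` W" and x: "in_list_span X x"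
  shows "x \<in> vec_fun ` W"
proof -
  have "lin_comb k c ((!) X) \<in> vec_fun ` W" if "k \<le> length X" for k c
    using that
  proof (induction k)
    case 0
    have "lin_comb 0 c ((!) X) = vec_fun (0\<^sub>v m)" by (simp add: lin_comb_def vec_fun_def)
    then show ?case using W unfolding is_subspace_def by blast
  next
    case (Suc k)
    then obtain v1 where v1: "v1 \<in> W" "lin_comb k c ((!) X) = vec_fun v1" by auto
    obtain v2 where v2: "v2 \<in> W" "X ! k = vec_fun v2" using X Suc.prems by (meson Suc_le_lessD image_iff nth_mem subsetD)
    have vc: "v1 \<in> carrier_vec m" "v2 \<in> carrier_vec m" using v1(1) v2(1) W unfolding is_subspace_def by auto
    have "lin_comb (Suc k) c ((!) X) = vec_fun (v1 + c k \<cdot>\<^sub>v v2)"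
      unfolding lin_comb_Suc v1(2) v2(2) vec_fun_def using vc
      by (auto simp: lin_comb_def sum.distrib ring_distribs sum_distrib_left mult.assoc intro!: sum.cong)
    moreover have "v1 + c k \<cdot>\<^sub>v v2 \<in> W" using v1(1) v2(1) W unfolding is_subspace_def by blast
    ultimately show ?case by blast
  qed
  then show ?thesis using x unfolding in_span_def by auto
qed

lemma eigenbasis_in_invariant_subspace:
  assumes inv: "is_invariant G m rho W" and W0: "W \<noteq> {0\<^sub>v m}"
  obtains L where "invariant_eigenbasis l (length L) ((!) L)" "set L \<subseteq> vec_fun ` W"
proof -
  have W: "is_subspace m W" using inv is_invariant_def by blast
  obtain w where w: "w \<in> W" "w \<noteq> 0\<^sub>v m" using W W0 unfolding is_subspace_def by blast
  have wc: "w \<in> carrier_vec m" using w(1) W unfolding is_subspace_def by blast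
  define u where "u = vec_fun w"
  have u_span: "in_span m b u" unfolding u_def vec_fun_def in_span_def by blast
  have "supported u" unfolding u_def vec_fun_def
    by (rule supported_lin_comb) (rule orthonormal_supported[OF b_orthonormal])
  moreover have "u \<noteq> (\<lambda>x. 0)" unfolding u_def by (rule vec_fun_nonzero[OF wc w(2)])
  moreover have "corr_gram u = (\<lambda>x. complex_of_real l * u x)"
    by (rule corr_gram.H_eigen_span[OF _ u_span]) (simp add: b_eigen)
  ultimately obtain L orbit where L: "invariant_eigenbasis l (length L) ((!) L)"
    and orbit: "set orbit \<subseteq> (\<lambda>g. rtrans g u) ` carrier G" "\<forall>x\<in>set L. in_list_span orbit x"
    by (rule invariant_eigenbasis_of_orbit)
  have "rtrans g u \<in> vec_fun ` W" if g: "g \<in> carrier G" for g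
  proof -
    have "rho g *\<^sub>v w \<in> W" using inv g w(1) unfolding is_invariant_def by blast
    then show ?thesis unfolding u_def rtrans_vec_fun[OF g wc] by blast
  qed
  then have "set orbit \<subseteq> vec_fun ` W" using orbit(1) by blast
  then have "set L \<subseteq> vec_fun ` W" using orbit(2) span_in_vec_fun_image[OF W] by blast
  then show ?thesis using L that by blast
qed

(* An invariant subspace contains an invariant eigenbasis, which by minimality of m has m
   elements and hence spans everything. *)

lemma rho_irreducible: "is_irrep G m rho"
  unfolding is_irrep_def
proof (intro conjI allI impI rho_rep m_pos)
  fix W assume inv: "is_invariant G m rho W"
  have W: "is_subspace m W" using inv is_invariant_def by blast
  have Wc: "W \<subseteq> carrier_vec m" using W unfolding is_subspace_def by blast
  show "W = {0\<^sub>v m} \<or> W = carrier_vec m"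
  proof (cases "W = {0\<^sub>v m}")
    case False
    then obtain L where L: "invariant_eigenbasis l (length L) ((!) L)" and L_W: "set L \<subseteq> vec_fun ` W"
      using eigenbasis_in_invariant_subspace[OF inv] by blast
    have L_b: "\<forall>i<length L. in_span m b (L ! i)"
    proof (intro allI impI)
      fix i assume "i < length L"
      then obtain v where "L ! i = vec_fun v" using L_W nth_mem by blast
      then show "in_span m b (L ! i)" unfolding vec_fun_def in_span_def by blast
    qed
    have L_on: "orthonormal_list L" using L unfolding invariant_eigenbasis_def by blast
    have "length L = m"
      using orthonormal_in_span_le[OF b_orthonormal L_on L_b] minimal[OF L] by simp
    then have "\<forall>j<m. in_list_span L (b j)"
      using orthonormal_in_span_same_length[OF b_orthonormal] L_on L_b by simp
    then have b_W: "set (map b [0..<m]) \<subseteq> vec_fun ` W"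
      using span_in_vec_fun_image[OF W L_W] by auto
    have "v \<in> W" if v: "v \<in> carrier_vec m" for v
    proof -
      have "vec_fun v = lin_comb (length (map b [0..<m])) (\<lambda>i. v $ i) ((!) (map b [0..<m]))"
        unfolding vec_fun_def length_map length_upt diff_zero by (intro lin_comb_cong) auto
      then have "in_list_span (map b [0..<m]) (vec_fun v)" unfolding in_span_def by blast
      then obtain v' where "v' \<in> W" "vec_fun v = vec_fun v'" using span_in_vec_fun_image[OF W b_W] by blast
      then show ?thesis using vec_fun_inj[OF v] Wc by blast
    qed
    then have "W = carrier_vec m" using Wc by blast
    then show ?thesis by simp
  qed simp
qed

(* If rho were trivial, b 0 would be constant on G; but eigenvectors for l > 0 are orthogonal
   to the constants, which corr annihilates when f has mean zero. *)

lemma rho_nontrivial: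
  assumes mean: "(\<Sum>x\<in>carrier G. f x) = 0" and l: "l > 0"
  shows "\<not> is_trivial_rep G m rho"
proof
  assume triv: "is_trivial_rep G m rho"
  define c where "c = b 0 \<one>"
  have const: "b 0 x = c" if x: "x \<in> carrier G" for x
  proof -
    have "rtrans x (b 0) = lin_comb m (\<lambda>i. rho x $$ (i, 0)) b" by (rule rtrans_basis[OF x m_pos])
    also have "\<dots> = lin_comb m (\<lambda>i. if i = 0 then 1 else 0) b"
      using triv x m_pos unfolding is_trivial_rep_def by (intro lin_comb_cong) simp_all
    also have "\<dots> = b 0" by (rule lin_comb_unit[OF m_pos])
    finally have "rtrans x (b 0) \<one> = c" unfolding c_def by simp
    then show ?thesis unfolding rtrans_def using x by simp
  qed
  define one where "one = (\<lambda>x. of_bool (x \<in> carrier G) :: complex)"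
  have "complex_of_real l * inner one (b 0) = inner one (corr_gram (b 0))"
    unfolding b_eigen[OF m_pos] by (rule inner_scale_right[symmetric])
  also have "\<dots> = inner (corr one) (corr (b 0))" by (rule inner_corr_gram)
  also have "\<dots> = 0" unfolding one_def corr_const_one[OF mean] by (rule inner_zero_left)
  finally have "inner one (b 0) = 0" using l by simp
  moreover have "inner one (b 0) = (\<Sum>x\<in>carrier G. c)"
    unfolding inner_def one_def by (intro sum.cong refl) (simp add: const)
  moreover have "card (carrier G) > 0" using finite_carrier by (auto simp: card_gt_0_iff)
  ultimately have "c = 0" by simp
  then have "inner (b 0) (b 0) = 0" unfolding inner_def by (intro sum.neutral) (simp add: const)
  then show False using orthonormal_inner[OF b_orthonormal m_pos m_pos] by simp
qed

definition matrix_coeff :: "nat \<Rightarrow> nat \<Rightarrow> 'a \<Rightarrow> complex" where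
  "matrix_coeff i j = (\<lambda>x. if x \<in> carrier G then rho x $$ (i, j) else 0)"

lemma inner_matrix_coeff:
  assumes "a < m" "c < m" "a' < m" "c' < m"
  shows "inner (matrix_coeff a c) (matrix_coeff a' c') =
    (if a' = a \<and> c = c' then of_nat (card (carrier G)) / of_nat m else 0)"
proof -
  have "inner (matrix_coeff a c) (matrix_coeff a' c') = (\<Sum>g\<in>carrier G. rho g $$ (a', c') * rho (inv g) $$ (c, a))"
    unfolding inner_def matrix_coeff_def using assms by (intro sum.cong refl) (simp add: rho_inv_entry mult.commute)
  then show ?thesis using schur_orthogonality[OF rho_irreducible assms(3,4,1,2)] by auto
qed

lemma basis_in_matrix_coeffs: assumes j: "j < m" shows "b j = lin_comb m (\<lambda>i. b i \<one>) (\<lambda>i. matrix_coeff i j)"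
proof
  fix x
  show "b j x = lin_comb m (\<lambda>i. b i \<one>) (\<lambda>i. matrix_coeff i j) x"
  proof (cases "x \<in> carrier G")
    case True
    have "b j x = rtrans x (b j) \<one>" unfolding rtrans_def using True by simp
    also have "\<dots> = lin_comb m (\<lambda>i. b i \<one>) (\<lambda>i. matrix_coeff i j) x"
      unfolding rtrans_basis[OF True j] lin_comb_def matrix_coeff_def using True by (simp add: mult.commute)
    finally show ?thesis .
  next
    case False
    then show ?thesis using orthonormal_supported[OF b_orthonormal j]
      unfolding supported_def lin_comb_def matrix_coeff_def by simp
  qed
qed

lemma corr_matrix_coeff:
  assumes "class_function G f"
  obtains c where "\<And>i j. i < m \<Longrightarrow> j < m \<Longrightarrow> corr (matrix_coeff i j) = (\<lambda>x. c * matrix_coeff i j x)"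
proof -
  obtain c where c: "\<And>i p. i < m \<Longrightarrow> p < m \<Longrightarrow>
      (\<Sum>x\<in>carrier G. complex_of_int (f x) * rho x $$ (i, p)) = (if i = p then c else 0)"
    using class_sum_scalar[OF rho_irreducible class_function_comp[OF assms]] by blast
  have "corr (matrix_coeff i j) y = c * matrix_coeff i j y" if i: "i < m" and j: "j < m" for i j y
  proof (cases "y \<in> carrier G")
    case True
    have "corr (matrix_coeff i j) y = (\<Sum>x\<in>carrier G. complex_of_int (f x) * rho (x \<otimes> y) $$ (i, j))"
      unfolding corr_def matrix_coeff_def using True by simp
    also have "\<dots> = (\<Sum>x\<in>carrier G. complex_of_int (f x) * (\<Sum>p<m. rho x $$ (i, p) * rho y $$ (p, j)))"
      using True i j by (intro sum.cong refl) (simp add: rep_mult_entry[OF rho_rep])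
    also have "\<dots> = (\<Sum>p<m. (\<Sum>x\<in>carrier G. complex_of_int (f x) * rho x $$ (i, p)) * rho y $$ (p, j))"
      by (simp add: sum_distrib_left sum_distrib_right sum.swap[of _ "{..<m}"] ac_simps)
    also have "\<dots> = (\<Sum>p<m. (if i = p then c else 0) * rho y $$ (p, j))"
      using i by (intro sum.cong refl) (simp add: c)
    also have "\<dots> = c * rho y $$ (i, j)"
      using i by (simp add: if_distrib[of "\<lambda>a. a * _"] cong: if_cong)
    finally show ?thesis unfolding matrix_coeff_def using True by simp
  qed (simp add: corr_def matrix_coeff_def)
  then show ?thesis using that by blast
qed

lemma corr_adj_matrix_coeff:
  assumes "class_function G f"
  obtains c where "\<And>i j. i < m \<Longrightarrow> j < m \<Longrightarrow> corr_adj (matrix_coeff i j) = (\<lambda>x. c * matrix_coeff i j x)"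
proof -
  obtain c where c: "\<And>p j. p < m \<Longrightarrow> j < m \<Longrightarrow>
      (\<Sum>x\<in>carrier G. complex_of_int (f (inv x)) * rho x $$ (p, j)) = (if p = j then c else 0)"
    using class_sum_scalar[OF rho_irreducible class_function_comp[OF class_function_inv[OF assms]]] by blast
  have "corr_adj (matrix_coeff i j) z = c * matrix_coeff i j z" if i: "i < m" and j: "j < m" for i j z
  proof (cases "z \<in> carrier G")
    case True
    have "corr_adj (matrix_coeff i j) z = (\<Sum>y\<in>carrier G. complex_of_int (f (z \<otimes> inv y)) * rho y $$ (i, j))"
      unfolding corr_adj_def matrix_coeff_def using True by (simp cong: sum.cong)
    also have "\<dots> = (\<Sum>x\<in>carrier G. complex_of_int (f (z \<otimes> inv (z \<otimes> x))) * rho (z \<otimes> x) $$ (i, j))"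
      by (rule sum_mult_left[OF True, symmetric])
    also have "\<dots> = (\<Sum>x\<in>carrier G. complex_of_int (f (inv x)) * (\<Sum>p<m. rho z $$ (i, p) * rho x $$ (p, j)))"
    proof (intro sum.cong refl)
      fix x assume x: "x \<in> carrier G"
      have "z \<otimes> inv (z \<otimes> x) = z \<otimes> inv x \<otimes> inv z" using x True by (simp add: inv_mult_group m_assoc)
      then have "f (z \<otimes> inv (z \<otimes> x)) = f (inv x)" using class_function_conj[OF assms True inv_closed[OF x]] by simp
      then show "complex_of_int (f (z \<otimes> inv (z \<otimes> x))) * rho (z \<otimes> x) $$ (i, j) =
          complex_of_int (f (inv x)) * (\<Sum>p<m. rho z $$ (i, p) * rho x $$ (p, j))"
        using rep_mult_entry[OF rho_rep True x i j] by simp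
    qed
    also have "\<dots> = (\<Sum>p<m. rho z $$ (i, p) * (\<Sum>x\<in>carrier G. complex_of_int (f (inv x)) * rho x $$ (p, j)))"
      by (simp add: sum_distrib_left sum_distrib_right sum.swap[of _ "{..<m}"] ac_simps)
    also have "\<dots> = (\<Sum>p<m. if p = j then c * rho z $$ (i, p) else 0)"
      using j by (intro sum.cong refl) (simp add: c)
    also have "\<dots> = c * rho z $$ (i, j)" using j by (simp add: sum.delta')
    finally show ?thesis unfolding matrix_coeff_def using True by simp
  qed (simp add: corr_adj_def matrix_coeff_def)
  then show ?thesis using that by blast
qed

lemma corr_gram_matrix_coeff:
  assumes "class_function G f" and "i < m" "j < m"
  shows "corr_gram (matrix_coeff i j) = (\<lambda>x. complex_of_real l * matrix_coeff i j x)"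
proof -
  obtain c1 where c1: "\<And>i j. i < m \<Longrightarrow> j < m \<Longrightarrow> corr (matrix_coeff i j) = (\<lambda>x. c1 * matrix_coeff i j x)"
    using corr_matrix_coeff[OF assms(1)] by blast
  obtain c2 where c2: "\<And>i j. i < m \<Longrightarrow> j < m \<Longrightarrow> corr_adj (matrix_coeff i j) = (\<lambda>x. c2 * matrix_coeff i j x)"
    using corr_adj_matrix_coeff[OF assms(1)] by blast
  have c: "corr_gram (matrix_coeff i j) = (\<lambda>x. c1 * c2 * matrix_coeff i j x)" if "i < m" "j < m" for i j
    unfolding corr_gram_def c1[OF that] corr_adj_scale c2[OF that] by (simp add: mult.assoc)
  have "corr_gram (b 0) = lin_comb m (\<lambda>i. b i \<one>) (\<lambda>i. corr_gram (matrix_coeff i 0))"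
    by (subst basis_in_matrix_coeffs[OF m_pos]) (rule corr_gram.H_lin_comb)
  also have "\<dots> = lin_comb m (\<lambda>i. b i \<one>) (\<lambda>i x. c1 * c2 * matrix_coeff i 0 x)"
    using c m_pos by (intro lin_comb_cong) auto
  also have "\<dots> = (\<lambda>x. c1 * c2 * b 0 x)"
    by (subst basis_in_matrix_coeffs[OF m_pos]) (simp add: lin_comb_def sum_distrib_left ac_simps)
  finally have "(\<lambda>x. c1 * c2 * b 0 x) = (\<lambda>x. complex_of_real l * b 0 x)" using b_eigen[OF m_pos] by simp
  moreover obtain x where "b 0 x \<noteq> 0"
    using orthonormal_inner[OF b_orthonormal m_pos m_pos] unfolding inner_def by force
  ultimately have "c1 * c2 = complex_of_real l" by (metis mult_right_cancel)
  then show ?thesis using c assms(2,3) by simp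
qed

(* The m\<^sup>2 matrix coefficients, suitably scaled, are an orthonormal family of l-eigenvectors. *)

lemma eigenvalue_bound:
  assumes "class_function G f" and "\<forall>x\<in>carrier G. f x = 1 \<or> f x = -1"
  shows "l * (real m)^2 \<le> (real (card (carrier G)))^2"
proof -
  define n where "n = card (carrier G)"
  have n: "n > 0" unfolding n_def using finite_carrier by (auto simp: card_gt_0_iff)
  define s where "s = complex_of_real (sqrt (real m / real n))"
  define w where "w t = (\<lambda>x. s * matrix_coeff (t div m) (t mod m) x)" for t
  have ss: "cnj s * s = of_nat m / of_nat n" unfolding s_def using n
    by (simp add: of_real_mult[symmetric] del: of_real_mult)
  have idx: "t div m < m" "t mod m < m" if "t < m * m" for t
    using that m_pos by (auto simp: less_mult_imp_div_less)
  have "orthonormal (m * m) w"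
    unfolding orthonormal_def
  proof (intro conjI allI impI)
    fix t show "supported (w t)" unfolding w_def supported_def matrix_coeff_def by simp
  next
    fix t t' assume t: "t < m * m" and t': "t' < m * m"
    have "(t' div m = t div m \<and> t mod m = t' mod m) = (t = t')" by (metis div_mult_mod_eq)
    then show "inner (w t) (w t') = (if t = t' then 1 else 0)"
      unfolding w_def inner_scale_left inner_scale_right mult.assoc[symmetric] ss
      using inner_matrix_coeff[OF idx[OF t] idx[OF t']] n m_pos unfolding n_def by auto
  qed
  moreover have "\<forall>t<m * m. corr_gram (w t) = (\<lambda>x. complex_of_real l * w t x)"
    unfolding w_def corr_gram.H_scale using corr_gram_matrix_coeff[OF assms(1) idx] by (simp add: ac_simps)
  ultimately have "real (m * m) * l \<le> (real n)^2"
    using orthonormal_eigenvectors_bound[OF assms(2)] unfolding n_def by blast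
  then show ?thesis unfolding n_def by (simp add: power2_eq_square ac_simps)
qed

end

lemma min_nontriv_irrep_dim_le:
  assumes "is_irrep G m \<rho>" "\<not> is_trivial_rep G m \<rho>"
  shows "0 < min_nontriv_irrep_dim G" and "min_nontriv_irrep_dim G \<le> m"
proof -
  have ex: "\<exists>\<rho> :: 'a \<Rightarrow> complex mat. is_irrep G m \<rho> \<and> \<not> is_trivial_rep G m \<rho>" using assms by blast
  show "min_nontriv_irrep_dim G \<le> m" unfolding min_nontriv_irrep_dim_def by (rule Least_le) (rule ex)
  have "\<exists>\<rho> :: 'a \<Rightarrow> complex mat. is_irrep G (min_nontriv_irrep_dim G) \<rho> \<and> \<not> is_trivial_rep G (min_nontriv_irrep_dim G) \<rho>"
    unfolding min_nontriv_irrep_dim_def by (rule LeastI) (rule ex)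
  then show "0 < min_nontriv_irrep_dim G" unfolding is_irrep_def by blast
qed

context group_correlation
begin

lemma card_multiplicative_pairs:
  assumes sign: "\<forall>x\<in>carrier G. f x = 1 \<or> f x = -1"
  shows "2 * real (card {(x, y). x \<in> carrier G \<and> y \<in> carrier G \<and> f x * f y = f (x \<otimes> y)})
    = (real (card (carrier G)))^2 + (\<Sum>x\<in>carrier G. \<Sum>y\<in>carrier G. real_of_int (f x * f y * f (x \<otimes> y)))"
proof -
  define P where "P z \<longleftrightarrow> f (fst z) * f (snd z) = f (fst z \<otimes> snd z)" for z
  have "{(x, y). x \<in> carrier G \<and> y \<in> carrier G \<and> f x * f y = f (x \<otimes> y)} = {z \<in> carrier G \<times> carrier G. P z}"
    unfolding P_def by auto
  then have "real (card {(x, y). x \<in> carrier G \<and> y \<in> carrier G \<and> f x * f y = f (x \<otimes> y)})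
      = (\<Sum>z\<in>carrier G \<times> carrier G. if P z then 1 else 0)"
    using sum.inter_filter[of "carrier G \<times> carrier G" "\<lambda>_. 1 :: real" P] finite_carrier by simp
  also have "\<dots> = (\<Sum>x\<in>carrier G. \<Sum>y\<in>carrier G. if f x * f y = f (x \<otimes> y) then 1 else 0)"
    unfolding P_def by (simp add: sum.cartesian_product')
  also have "\<dots> = (\<Sum>x\<in>carrier G. \<Sum>y\<in>carrier G. (1 + real_of_int (f x * f y * f (x \<otimes> y))) / 2)"
  proof (intro sum.cong refl)
    fix x y assume "x \<in> carrier G" "y \<in> carrier G"
    then have "f x = 1 \<or> f x = -1" "f y = 1 \<or> f y = -1" "f (x \<otimes> y) = 1 \<or> f (x \<otimes> y) = -1"
      using sign by blast+
    then show "(if f x * f y = f (x \<otimes> y) then 1 else 0) = (1 + real_of_int (f x * f y * f (x \<otimes> y))) / 2"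
      by auto
  qed
  finally show ?thesis
    by (simp add: sum.distrib sum_divide_distrib[symmetric] power2_eq_square)
qed

lemma exists_minimal_eigenbasis:
  assumes "supported e" "e \<noteq> (\<lambda>x. 0)" "corr_gram e = (\<lambda>x. complex_of_real l * e x)"
  obtains m b where "minimal_eigenbasis G f l m b"
proof -
  obtain L where "invariant_eigenbasis l (length L) ((!) L)"
    using invariant_eigenbasis_of_orbit[OF assms] by blast
  then have ex: "\<exists>m b. invariant_eigenbasis l m b" by blast
  define m where "m = (LEAST m. \<exists>b. invariant_eigenbasis l m b)"
  obtain b where "invariant_eigenbasis l m b" using LeastI_ex[OF ex] unfolding m_def by blast
  moreover have "\<And>m' b'. invariant_eigenbasis l m' b' \<Longrightarrow> m \<le> m'" unfolding m_def by (rule Least_le) blast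
  ultimately have "minimal_eigenbasis G f l m b" by unfold_locales auto
  then show ?thesis by (rule that)
qed

lemma triple_correlation_sq_le:
  assumes sign: "\<forall>x\<in>carrier G. f x = 1 \<or> f x = -1"
  obtains l e where "supported e" "e \<noteq> (\<lambda>x. 0)" "corr_gram e = (\<lambda>x. complex_of_real l * e x)"
    and "(\<Sum>x\<in>carrier G. \<Sum>y\<in>carrier G. real_of_int (f x * f y * f (x \<otimes> y)))^2
      \<le> (real (card (carrier G)))^2 * l"
proof -
  let ?T = "\<Sum>x\<in>carrier G. \<Sum>y\<in>carrier G. real_of_int (f x * f y * f (x \<otimes> y))"
  define fc where "fc = (\<lambda>x. if x \<in> carrier G then complex_of_int (f x) else 0)"
  have "f \<one> = 1 \<or> f \<one> = -1" using sign by blast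
  then have "fc \<one> \<noteq> 0" unfolding fc_def by auto
  then have fc: "supported fc" "fc \<noteq> (\<lambda>x. 0)" "Re (inner fc fc) = real (card (carrier G))"
    using inner_sign_fun[OF sign] unfolding fc_def supported_def by (auto dest: fun_cong[of _ _ \<one>])
  have "inner fc (corr fc) = (\<Sum>y\<in>carrier G. \<Sum>x\<in>carrier G. complex_of_int (f x * f y * f (x \<otimes> y)))"
    unfolding inner_def corr_def fc_def by (intro sum.cong refl) (simp add: sum_distrib_left ac_simps)
  also have "\<dots> = (\<Sum>x\<in>carrier G. \<Sum>y\<in>carrier G. complex_of_int (f x * f y * f (x \<otimes> y)))"
    by (rule sum.swap)
  also have "\<dots> = complex_of_real ?T" by simp
  finally have "?T^2 = (cmod (inner fc (corr fc)))^2" by (simp only: norm_of_real power2_abs)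
  also have "\<dots> \<le> real (card (carrier G)) * Re (inner fc (corr_gram fc))"
    using cauchy_schwarz[OF fc(1), of "corr fc"] unfolding fc(3) inner_corr_gram .
  finally have "?T^2 \<le> real (card (carrier G)) * Re (inner fc (corr_gram fc))" .
  moreover obtain l e where e: "supported e" "e \<noteq> (\<lambda>x. 0)" "corr_gram e = (\<lambda>x. complex_of_real l * e x)"
    and "Re (inner fc (corr_gram fc)) \<le> l * Re (inner fc fc)"
    by (rule corr_gram.eigenvalue_ge_rayleigh[OF fc(1,2)])
  ultimately have "?T^2 \<le> (real (card (carrier G)))^2 * l" unfolding fc(3)
    by (smt (verit) mult_left_mono of_nat_0_le_iff power2_eq_square mult.assoc mult.commute)
  then show ?thesis using that e by blast
qed

lemma triple_correlation_le:
  assumes cls: "class_function G f" and sign: "\<forall>x\<in>carrier G. f x = 1 \<or> f x = -1"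
    and mean: "(\<Sum>x\<in>carrier G. f x) = 0"
  shows "(\<Sum>x\<in>carrier G. \<Sum>y\<in>carrier G. real_of_int (f x * f y * f (x \<otimes> y)))
     \<le> (real (card (carrier G)))^2 / real (min_nontriv_irrep_dim G)"
    (is "?T \<le> (real ?n)^2 / real ?d")
proof -
  obtain l e where e: "supported e" "e \<noteq> (\<lambda>x. 0)" "corr_gram e = (\<lambda>x. complex_of_real l * e x)"
    and T2: "?T^2 \<le> (real ?n)^2 * l"
    using triple_correlation_sq_le[OF sign] by blast
  show ?thesis
  proof (cases "l \<le> 0")
    case True
    then have "?T^2 \<le> 0" using T2 by (smt (verit) mult_nonneg_nonpos zero_le_power2)
    then show ?thesis by simp
  next
    case False
    obtain m b where "minimal_eigenbasis G f l m b" using exists_minimal_eigenbasis[OF e] .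
    then interpret minimal_eigenbasis G f l m b .
    have "l > 0" using False by simp
    note d = min_nontriv_irrep_dim_le[OF rho_irreducible rho_nontrivial[OF mean this]]
    have "l \<le> (real ?n)^2 / (real m)^2"
      using eigenvalue_bound[OF cls sign] m_pos by (subst pos_le_divide_eq) simp_all
    then have "(real ?n)^2 * l \<le> (real ?n)^2 * ((real ?n)^2 / (real m)^2)" by (rule mult_left_mono) simp
    also have "\<dots> = ((real ?n)^2 / real m)^2" by (simp add: power_divide power2_eq_square)
    finally have "?T^2 \<le> ((real ?n)^2 / real m)^2" using T2 by linarith
    then have "?T \<le> (real ?n)^2 / real m" by (rule power2_le_imp_le) simp
    also have "\<dots> \<le> (real ?n)^2 / real ?d" using d by (intro divide_left_mono) auto
    finally show ?thesis .
  qed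
qed

end

theorem theorem2:
  fixes G :: "('a, 'b) monoid_scheme" and f :: "'a \<Rightarrow> int"
  assumes "group G" and "finite (carrier G)"
    and "\<forall>x\<in>carrier G. f x = 1 \<or> f x = -1"
    and "\<forall>x\<in>carrier G. \<forall>y\<in>carrier G. f (inv\<^bsub>G\<^esub> x \<otimes>\<^bsub>G\<^esub> y \<otimes>\<^bsub>G\<^esub> x) = f y"
    and "(\<Sum>x\<in>carrier G. real_of_int (f x)) / real (card (carrier G)) = 0"
  shows "real (card {(x, y). x \<in> carrier G \<and> y \<in> carrier G \<and> f x * f y = f (x \<otimes>\<^bsub>G\<^esub> y)})
           / real (card (carrier G)) ^ 2
         \<le> (1 / 2) * (1 + 1 / real (min_nontriv_irrep_dim G))"
proof -
  interpret group_correlation G f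
    by (intro group_correlation.intro group_correlation_axioms.intro assms(1,2))
  define n where "n = real (card (carrier G))"
  define T where "T = (\<Sum>x\<in>carrier G. \<Sum>y\<in>carrier G. real_of_int (f x * f y * f (x \<otimes>\<^bsub>G\<^esub> y)))"
  have n: "n > 0" unfolding n_def using assms(2) by (auto simp: card_gt_0_iff)
  have "(\<Sum>x\<in>carrier G. f x) = 0" using assms(5) n unfolding n_def by (simp flip: of_int_sum)
  then have T: "T \<le> n^2 / real (min_nontriv_irrep_dim G)"
    using triple_correlation_le assms(3,4) unfolding T_def n_def class_function_def by blast
  have "2 * real (card {(x, y). x \<in> carrier G \<and> y \<in> carrier G \<and> f x * f y = f (x \<otimes>\<^bsub>G\<^esub> y)}) = n^2 + T"
    unfolding n_def T_def by (rule card_multiplicative_pairs[OF assms(3)])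
  then have "real (card {(x, y). x \<in> carrier G \<and> y \<in> carrier G \<and> f x * f y = f (x \<otimes>\<^bsub>G\<^esub> y)}) / n^2
      = 1 / 2 + T / (2 * n^2)"
    using n by (simp add: field_simps)
  also have "\<dots> \<le> 1 / 2 + (n^2 / real (min_nontriv_irrep_dim G)) / (2 * n^2)"
    using divide_right_mono[OF T, of "2 * n^2"] n by simp
  also have "\<dots> = (1 / 2) * (1 + 1 / real (min_nontriv_irrep_dim G))" using n by (simp add: field_simps)
  finally show ?thesis unfolding n_def .
qed

end
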